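(* Let $Z_1, Z_2, \ldots$ be independent, identically distributed random vectors in $\mathbb{R}^2$, and let $Z_1', Z_2', \ldots$ be an independent copy of this sequence. Let $S_0 := 0$, $S_n := \sum_{i=1}^n Z_i$. Fix $n \in \mathbb{N}$ and for $i \in \{1,\ldots,n\}$ define $S_j^{(i)} := S_j$ if $j < i$ and $S_j^{(i)} := S_j - Z_i + Z_i'$ if $j \geq i$ ($0\le j\le n$). For $\theta \in [0,\pi]$ let $e_\theta := (\cos\theta,\sin\theta)$; let $\underline{J}_n(\theta)$ and $\bar J_n(\theta)$ be indices in $\{0,\ldots,n\}$ at which $j \mapsto S_j \cdot e_\theta$ attains its minimum and maximum respectively, and $\underline{J}_n^{(i)}(\theta)$, $\bar J_n^{(i)}(\theta)$ the analogous indices for $j \mapsto S_j^{(i)}\cdot e_\theta$. Let $\Delta_n^{(i)}(\theta) := R_n(\theta) - R_n^{(i)}(\theta)$ where $R_n(\theta) := \max_{0\le j\le n} S_j\cdot e_\theta - \min_{0\le j \le n} S_j\cdot e_\theta$ and $R_n^{(i)}(\theta)$ is defined likewise with $S_j^{(i)}$. For $\gamma \in (0,1/2)$ and $\delta \in (0,\pi/2)$, let $E_{n,i}(\delta,\gamma)$ be the event that for all $\theta \in [\delta,\pi-\delta]$: $\underline{J}_n(\theta) < \gamma n$, $\bar J_n(\theta) > (1-\gamma)n$, $\underline{J}_n^{(i)}(\theta) < \gamma n$ and $\bar J_n^{(i)}(\theta) > (1-\gamma)n$. Let $I_{n,\gamma} := \{1,\ldots,n\} \cap [\gamma n, (1-\gamma)n]$.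 Then for any $\gamma \in (0,1/2)$ and $\delta \in (0,\pi/2)$: (i) if $i \in I_{n,\gamma}$, then almost surely, for every $\theta \in [\delta,\pi-\delta]$, \[ \Delta_n^{(i)}(\theta)\, \mathbf{1}(E_{n,i}(\delta,\gamma)) = (Z_i - Z_i')\cdot e_\theta\, \mathbf{1}(E_{n,i}(\delta,\gamma)); \] (ii) if $\mathbb{E}\|Z_1\| < \infty$ and $\mathbb{E}[Z_1] = \mu e_{\pi/2}$ with $\mu \in (0,\infty)$, then $\min_{1\le i\le n} \Pr[E_{n,i}(\delta,\gamma)] \to 1$ as $n \to \infty$.
   Context: The paper adopts, from this point on, the standing assumption that the mean drift points in direction $\pi/2$, i.e. $\mathbb{E}[Z_1] = \mu e_{\pi/2}$ with $\mu>0$; this is used in part (ii). *)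

theory Defs
  imports "HOL-Probability.Probability"
begin

definition walk :: "(nat \<Rightarrow> 'a \<Rightarrow> real \<times> real) \<Rightarrow> nat \<Rightarrow> 'a \<Rightarrow> real \<times> real" where
  "walk Z j \<omega> = (\<Sum>k\<in>{1..j}. Z k \<omega>)"

definition walk_res :: "(nat \<Rightarrow> 'a \<Rightarrow> real \<times> real) \<Rightarrow> (nat \<Rightarrow> 'a \<Rightarrow> real \<times> real)
    \<Rightarrow> nat \<Rightarrow> nat \<Rightarrow> 'a \<Rightarrow> real \<times> real" where
  "walk_res Z Z' i j \<omega> = (if j < i then walk Z j \<omega> else walk Z j \<omega> - Z i \<omega> + Z' i \<omega>)"

definition e :: "real \<Rightarrow> real \<times> real" where
  "e \<theta> = (cos \<theta>, sin \<theta>)"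

definition Jmin :: "(nat \<Rightarrow> real \<times> real) \<Rightarrow> nat \<Rightarrow> real \<Rightarrow> nat" where
  "Jmin P n \<theta> = (LEAST j. j \<le> n \<and> (\<forall>k\<le>n. P j \<bullet> e \<theta> \<le> P k \<bullet> e \<theta>))"

definition Jmax :: "(nat \<Rightarrow> real \<times> real) \<Rightarrow> nat \<Rightarrow> real \<Rightarrow> nat" where
  "Jmax P n \<theta> = (LEAST j. j \<le> n \<and> (\<forall>k\<le>n. P k \<bullet> e \<theta> \<le> P j \<bullet> e \<theta>))"

definition Rng :: "(nat \<Rightarrow> real \<times> real) \<Rightarrow> nat \<Rightarrow> real \<Rightarrow> real" where
  "Rng P n \<theta> = (MAX j\<in>{0..n}. P j \<bullet> e \<theta>) - (MIN j\<in>{0..n}. P j \<bullet> e \<theta>)"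

definition Delta :: "(nat \<Rightarrow> 'a \<Rightarrow> real \<times> real) \<Rightarrow> (nat \<Rightarrow> 'a \<Rightarrow> real \<times> real)
    \<Rightarrow> nat \<Rightarrow> nat \<Rightarrow> real \<Rightarrow> 'a \<Rightarrow> real" where
  "Delta Z Z' n i \<theta> \<omega> = Rng (\<lambda>j. walk Z j \<omega>) n \<theta> - Rng (\<lambda>j. walk_res Z Z' i j \<omega>) n \<theta>"

definition Ev :: "'a measure \<Rightarrow> (nat \<Rightarrow> 'a \<Rightarrow> real \<times> real) \<Rightarrow> (nat \<Rightarrow> 'a \<Rightarrow> real \<times> real)
    \<Rightarrow> nat \<Rightarrow> nat \<Rightarrow> real \<Rightarrow> real \<Rightarrow> 'a set" where
  "Ev M Z Z' n i \<delta> \<gamma> = {\<omega> \<in> space M. \<forall>\<theta>\<in>{\<delta>..pi - \<delta>}.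
      real (Jmin (\<lambda>j. walk Z j \<omega>) n \<theta>) < \<gamma> * real n \<and>
      real (Jmax (\<lambda>j. walk Z j \<omega>) n \<theta>) > (1 - \<gamma>) * real n \<and>
      real (Jmin (\<lambda>j. walk_res Z Z' i j \<omega>) n \<theta>) < \<gamma> * real n \<and>
      real (Jmax (\<lambda>j. walk_res Z Z' i j \<omega>) n \<theta>) > (1 - \<gamma>) * real n}"

definition Iset :: "nat \<Rightarrow> real \<Rightarrow> nat set" where
  "Iset n \<gamma> = {i \<in> {1..n}. \<gamma> * real n \<le> real i \<and> real i \<le> (1 - \<gamma>) * real n}"

end

theory Submission
  imports Defs
begin

text \<open>
  (i) On the event E, both walks attain their minimum in direction e \<theta> before step i and their
  maximum from step i on. The resampled walk coincides with S before i and is shifted by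
  (Z' i - Z i) \<bullet> e \<theta> from i on, so the two ranges differ by exactly (Z i - Z' i) \<bullet> e \<theta>.

  (ii) The minimum is attained before \<gamma> n unless walk Z m \<bullet> e \<theta> \<le> 0 for some m \<ge> \<gamma> n, and the
  maximum after (1 - \<gamma>) n unless the sum of the last m increments has non-positive projection
  for some m \<ge> \<gamma> n; the same holds for the resampled walk. All four conditions concern sums
  of m \<ge> \<gamma> n i.i.d. increments over nested index sets. A weak law of large numbers that is
  uniform over such windows (truncation and Chebyshev for each window length, then monotonicity
  of the sums of the positive and negative parts between the points of a finite grid) shows that
  these sums are m \<mu> e (\<pi>/2) + o(m) with probability tending to one, uniformly in i, and
  such vectors have positive projection on every e \<theta> with \<theta> \<in> [\<delta>, \<pi> - \<delta>].
\<close>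

lemma tail_measure_o_n:
  fixes D :: "real measure"
  assumes "prob_space D" and [measurable_cong]: "sets D = sets borel" and "integrable D (\<lambda>x. x)"
  shows "(\<lambda>n. real n * measure D {x. real n < \<bar>x\<bar>}) \<longlonglongrightarrow> 0"
proof -
  interpret D: prob_space D by fact
  have intabs: "integrable D abs" using assms(3) by auto
  have "(\<lambda>n. \<integral>x. \<bar>x\<bar> * indicator {x. real n < \<bar>x\<bar>} x \<partial>D) \<longlonglongrightarrow> (\<integral>x. 0 \<partial>D)"
  proof (rule integral_dominated_convergence[where w=abs])
    show "AE x in D. (\<lambda>n. \<bar>x\<bar> * indicator {x. real n < \<bar>x\<bar>} x) \<longlonglongrightarrow> 0"
    proof (rule AE_I2)
      fix x :: real
      obtain N :: nat where "\<bar>x\<bar> \<le> real N" using real_arch_simple by blast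
      then have "\<forall>n\<ge>N. \<bar>x\<bar> * indicator {x. real n < \<bar>x\<bar>} x = 0"
        by (auto simp: indicator_def)
      then show "(\<lambda>n. \<bar>x\<bar> * indicator {x. real n < \<bar>x\<bar>} x) \<longlonglongrightarrow> 0"
        by (intro tendsto_eventually) (auto simp: eventually_sequentially)
    qed
    show "AE x in D. norm (\<bar>x\<bar> * indicator {x. real n < \<bar>x\<bar>} x) \<le> \<bar>x\<bar>" for n
      by (auto simp: indicator_def)
    show "(\<lambda>x. \<bar>x\<bar> * indicator {x. real n < \<bar>x\<bar>} x) \<in> borel_measurable D" for n
      by measurable
    show "(\<lambda>x. 0) \<in> borel_measurable D" by simp
    show "integrable D abs" by (rule intabs)
  qed
  then have lim: "(\<lambda>n. \<integral>x. \<bar>x\<bar> * indicator {x. real n < \<bar>x\<bar>} x \<partial>D) \<longlonglongrightarrow> 0"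
    by simp
  have bound: "real n * measure D {x. real n < \<bar>x\<bar>} \<le> (\<integral>x. \<bar>x\<bar> * indicator {x. real n < \<bar>x\<bar>} x \<partial>D)"
    for n
  proof -
    have sets: "{x. real n < \<bar>x\<bar>} \<in> sets D" by measurable
    then have "real n * measure D {x. real n < \<bar>x\<bar>} = (\<integral>x. real n * indicator {x. real n < \<bar>x\<bar>} x \<partial>D)"
      by simp
    also have "\<dots> \<le> (\<integral>x. \<bar>x\<bar> * indicator {x. real n < \<bar>x\<bar>} x \<partial>D)"
    proof (rule integral_mono)
      show "integrable D (\<lambda>x. real n * indicator {x. real n < \<bar>x\<bar>} x)"
        using sets by (intro integrable_mult_right integrable_real_indicator)
          (auto simp: D.emeasure_finite[unfolded top.not_eq_extremum])
      show "integrable D (\<lambda>x. \<bar>x\<bar> * indicator {x. real n < \<bar>x\<bar>} x)"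
        using integrable_mult_indicator[OF sets intabs] by (simp add: mult.commute)
    qed (auto simp: indicator_def)
    finally show ?thesis .
  qed
  show ?thesis
  proof (rule tendsto_sandwich[OF _ _ tendsto_const lim])
    show "\<forall>\<^sub>F n in sequentially. 0 \<le> real n * measure D {x. real n < \<bar>x\<bar>}"
      by simp
    show "\<forall>\<^sub>F n in sequentially. real n * measure D {x. real n < \<bar>x\<bar>}
        \<le> (\<integral>x. \<bar>x\<bar> * indicator {x. real n < \<bar>x\<bar>} x \<partial>D)"
      using bound by simp
  qed
qed

definition trunc :: "real \<Rightarrow> real \<Rightarrow> real" where
  "trunc t x = (if \<bar>x\<bar> \<le> t then x else 0)"

lemma trunc_measurable[measurable]: "trunc t \<in> borel_measurable borel"
  unfolding trunc_def by measurable

lemma abs_trunc_le: "\<bar>trunc t x\<bar> \<le> \<bar>x\<bar>"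
  by (simp add: trunc_def)

lemma abs_trunc_le_bound: "0 \<le> t \<Longrightarrow> \<bar>trunc t x\<bar> \<le> t"
  by (simp add: trunc_def)

lemma trunc_eventually_eq: "\<forall>\<^sub>F n in sequentially. trunc (real n) x = x"
proof -
  obtain N :: nat where "\<bar>x\<bar> \<le> real N" using real_arch_simple by blast
  then show ?thesis
    unfolding eventually_sequentially by (intro exI[of _ N]) (auto simp: trunc_def)
qed

lemma truncated_second_moment_o_n:
  fixes D :: "real measure"
  assumes [measurable_cong]: "sets D = sets borel" and "integrable D (\<lambda>x. x)"
  shows "(\<lambda>n. \<integral>x. (trunc (real n) x)\<^sup>2 / real n \<partial>D) \<longlonglongrightarrow> 0"
proof -
  have "(\<lambda>n. \<integral>x. (trunc (real n) x)\<^sup>2 / real n \<partial>D) \<longlonglongrightarrow> (\<integral>x. 0 \<partial>D)"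
  proof (rule integral_dominated_convergence[where w=abs])
    show "AE x in D. (\<lambda>n. (trunc (real n) x)\<^sup>2 / real n) \<longlonglongrightarrow> 0"
    proof (rule AE_I2)
      fix x :: real
      have ev: "\<forall>\<^sub>F n in sequentially. x\<^sup>2 * (1 / real n) = (trunc (real n) x)\<^sup>2 / real n"
        using trunc_eventually_eq[of x] by eventually_elim simp
      have "(\<lambda>n. x\<^sup>2 * (1 / real n)) \<longlonglongrightarrow> x\<^sup>2 * 0"
        by (intro tendsto_mult tendsto_const lim_const_over_n)
      then show "(\<lambda>n. (trunc (real n) x)\<^sup>2 / real n) \<longlonglongrightarrow> 0"
        using Lim_transform_eventually[OF _ ev] by simp
    qed
    show "AE x in D. norm ((trunc (real n) x)\<^sup>2 / real n) \<le> \<bar>x\<bar>" for n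
    proof (rule AE_I2)
      fix x :: real
      have "\<bar>trunc (real n) x\<bar> * \<bar>trunc (real n) x\<bar> \<le> \<bar>x\<bar> * real n"
        using abs_trunc_le[of "real n" x] abs_trunc_le_bound[of "real n" x] by (intro mult_mono) auto
      then have "(trunc (real n) x)\<^sup>2 \<le> \<bar>x\<bar> * real n"
        by (simp add: power2_eq_square)
      then show "norm ((trunc (real n) x)\<^sup>2 / real n) \<le> \<bar>x\<bar>"
        by (cases "n = 0") (simp_all add: divide_le_eq)
    qed
    show "(\<lambda>x. (trunc (real n) x)\<^sup>2 / real n) \<in> borel_measurable D" for n
      by measurable
    show "(\<lambda>x. 0) \<in> borel_measurable D" by simp
    show "integrable D abs" using assms(2) by auto
  qed
  then show ?thesis by simp
qed

lemma truncated_mean_tendsto: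
  fixes D :: "real measure"
  assumes [measurable_cong]: "sets D = sets borel" and "integrable D (\<lambda>x. x)"
  shows "(\<lambda>n. \<integral>x. trunc (real n) x \<partial>D) \<longlonglongrightarrow> (\<integral>x. x \<partial>D)"
proof (rule integral_dominated_convergence[where w=abs])
  show "AE x in D. (\<lambda>n. trunc (real n) x) \<longlonglongrightarrow> x"
  proof (rule AE_I2)
    fix x :: real
    show "(\<lambda>n. trunc (real n) x) \<longlonglongrightarrow> x"
      using trunc_eventually_eq[of x] by (simp add: tendsto_eventually)
  qed
  show "AE x in D. norm (trunc (real n) x) \<le> \<bar>x\<bar>" for n
    using abs_trunc_le by simp
  show "trunc (real n) \<in> borel_measurable D" for n
    by measurable
  show "(\<lambda>x. x) \<in> borel_measurable D" by measurable
  show "integrable D abs" using assms(2) by auto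
qed

lemma square_le_of_abs_le: "\<bar>x\<bar> \<le> b \<Longrightarrow> x\<^sup>2 \<le> (b::real)\<^sup>2"
  using power_mono[of "\<bar>x\<bar>" b 2] by simp

lemma (in prob_space) integral_square_sum_indep:
  fixes Y :: "'i \<Rightarrow> 'a \<Rightarrow> real"
  assumes "finite I" "indep_vars (\<lambda>_. borel) Y I"
    and bnd: "\<And>i x. i \<in> I \<Longrightarrow> \<bar>Y i x\<bar> \<le> B"
    and zero: "\<And>i. i \<in> I \<Longrightarrow> expectation (Y i) = 0"
  shows "expectation (\<lambda>x. (\<Sum>i\<in>I. Y i x)\<^sup>2) = (\<Sum>i\<in>I. expectation (\<lambda>x. (Y i x)\<^sup>2))"
  using assms
proof (induction I rule: finite_induct)
  case empty
  then show ?case by simp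
next
  case (insert i I)
  have ind: "indep_vars (\<lambda>_. borel) Y I"
    using insert.prems(1) by (rule indep_vars_subset) auto
  have meas[measurable]: "\<And>j. j \<in> insert i I \<Longrightarrow> Y j \<in> borel_measurable M"
    using insert.prems(1) unfolding indep_vars_def by auto
  have intY: "\<And>j. j \<in> insert i I \<Longrightarrow> integrable M (Y j)"
    by (rule integrable_const_bound[where B=B]) (auto intro: insert.prems(2))
  have measS: "(\<lambda>x. \<Sum>j\<in>I. Y j x) \<in> borel_measurable M"
    using meas by (intro borel_measurable_sum) auto
  have bS: "\<bar>\<Sum>j\<in>I. Y j x\<bar> \<le> real (card I) * B" for x
  proof -
    have "\<bar>\<Sum>j\<in>I. Y j x\<bar> \<le> (\<Sum>j\<in>I. \<bar>Y j x\<bar>)" by (rule sum_abs)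
    also have "\<dots> \<le> (\<Sum>j\<in>I. B)" by (intro sum_mono insert.prems(2)) auto
    finally show ?thesis by simp
  qed
  have intS: "integrable M (\<lambda>x. \<Sum>j\<in>I. Y j x)"
    by (rule integrable_const_bound[where B="real (card I) * B"]) (use bS measS in auto)
  have intS2: "integrable M (\<lambda>x. (\<Sum>j\<in>I. Y j x)\<^sup>2)"
    using measS square_le_of_abs_le[OF bS] by (intro integrable_const_bound) auto
  have intY2: "integrable M (\<lambda>x. (Y i x)\<^sup>2)"
    using square_le_of_abs_le[OF insert.prems(2)] by (intro integrable_const_bound) auto
  have iv: "indep_var borel (Y i) borel (\<lambda>\<omega>. \<Sum>j\<in>I. Y j \<omega>)"
    using insert by (intro indep_vars_sum) auto
  have cross: "expectation (\<lambda>x. Y i x * (\<Sum>j\<in>I. Y j x)) = 0"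
    using indep_var_lebesgue_integral[OF iv intY intS] insert.prems(3)[of i] by simp
  have intC: "integrable M (\<lambda>x. Y i x * (\<Sum>j\<in>I. Y j x))"
    using indep_var_integrable[OF iv intY intS] by simp
  have "expectation (\<lambda>x. (\<Sum>j\<in>insert i I. Y j x)\<^sup>2)
      = expectation (\<lambda>x. (Y i x)\<^sup>2 + 2 * (Y i x * (\<Sum>j\<in>I. Y j x)) + (\<Sum>j\<in>I. Y j x)\<^sup>2)"
    using insert.hyps by (intro Bochner_Integration.integral_cong) (simp_all add: power2_sum algebra_simps)
  also have "\<dots> = expectation (\<lambda>x. (Y i x)\<^sup>2) + 2 * expectation (\<lambda>x. Y i x * (\<Sum>j\<in>I. Y j x))
       + expectation (\<lambda>x. (\<Sum>j\<in>I. Y j x)\<^sup>2)"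
    using intY2 intC intS2 by simp
  also have "\<dots> = expectation (\<lambda>x. (Y i x)\<^sup>2) + (\<Sum>j\<in>I. expectation (\<lambda>x. (Y j x)\<^sup>2))"
    using cross insert.IH[OF ind] insert.prems by auto
  finally show ?case using insert.hyps by simp
qed

lemma (in prob_space) prob_exists_abs_gt_le:
  fixes X :: "'i \<Rightarrow> 'a \<Rightarrow> real"
  assumes "finite I" and [measurable]: "\<And>i. i \<in> I \<Longrightarrow> X i \<in> borel_measurable M"
    and dist: "\<And>i. i \<in> I \<Longrightarrow> distr M borel (X i) = D"
  shows "prob (\<Union>i\<in>I. {\<omega>\<in>space M. t < \<bar>X i \<omega>\<bar>}) \<le> real (card I) * measure D {x. t < \<bar>x\<bar>}"
proof -
  have "prob {\<omega>\<in>space M. t < \<bar>X i \<omega>\<bar>} = measure D {x. t < \<bar>x\<bar>}" if "i \<in> I" for i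
  proof -
    have "measure D {x. t < \<bar>x\<bar>} = measure (distr M borel (X i)) {x. t < \<bar>x\<bar>}"
      using dist[OF that] by simp
    also have "\<dots> = prob (X i -` {x. t < \<bar>x\<bar>} \<inter> space M)"
      using that by (intro measure_distr) auto
    finally show ?thesis by (auto intro: arg_cong[where f=prob])
  qed
  moreover have "prob (\<Union>i\<in>I. {\<omega>\<in>space M. t < \<bar>X i \<omega>\<bar>}) \<le> (\<Sum>i\<in>I. prob {\<omega>\<in>space M. t < \<bar>X i \<omega>\<bar>})"
    using assms(1) by (intro finite_measure_subadditive_finite) auto
  ultimately show ?thesis by simp
qed

lemma (in prob_space) prob_sum_deviation_le:
  fixes Y :: "'i \<Rightarrow> 'a \<Rightarrow> real"
  assumes "finite I" and indep: "indep_vars (\<lambda>_. borel) Y I"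
    and bounded: "\<And>i \<omega>. \<bar>Y i \<omega>\<bar> \<le> B"
    and mean: "\<And>i. i \<in> I \<Longrightarrow> expectation (Y i) = m"
    and second_moment: "\<And>i. i \<in> I \<Longrightarrow> expectation (\<lambda>\<omega>. (Y i \<omega>)\<^sup>2) \<le> s"
    and "0 < c"
  shows "prob {\<omega>\<in>space M. c \<le> \<bar>(\<Sum>i\<in>I. Y i \<omega>) - real (card I) * m\<bar>} \<le> real (card I) * s / c\<^sup>2"
proof -
  define S where "S \<omega> = (\<Sum>i\<in>I. Y i \<omega>)" for \<omega>
  have [measurable]: "Y i \<in> borel_measurable M" if "i \<in> I" for i
    using indep that unfolding indep_vars_def by auto
  have [measurable]: "S \<in> borel_measurable M"
    unfolding S_def by (intro borel_measurable_sum) auto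
  have intY: "integrable M (Y i)" if "i \<in> I" for i
    by (rule integrable_const_bound[where B=B]) (use bounded that in auto)
  have intY2: "integrable M (\<lambda>\<omega>. (Y i \<omega>)\<^sup>2)" if "i \<in> I" for i
    using that square_le_of_abs_le[OF bounded] by (intro integrable_const_bound) auto
  have "expectation S = (\<Sum>i\<in>I. expectation (Y i))"
    unfolding S_def by (rule Bochner_Integration.integral_sum) (rule intY)
  also have "\<dots> = (\<Sum>i\<in>I. m)"
    using mean by (rule sum.cong[OF refl])
  finally have ES: "expectation S = real (card I) * m"
    by simp
  have "\<bar>S \<omega>\<bar> \<le> real (card I) * B" for \<omega>
  proof -
    have "\<bar>S \<omega>\<bar> \<le> (\<Sum>i\<in>I. \<bar>Y i \<omega>\<bar>)" unfolding S_def by (rule sum_abs)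
    also have "\<dots> \<le> (\<Sum>i\<in>I. B)" by (intro sum_mono bounded)
    finally show ?thesis by simp
  qed
  then have intS2: "integrable M (\<lambda>\<omega>. (S \<omega>)\<^sup>2)"
    using square_le_of_abs_le by (intro integrable_const_bound) auto
  have "variance S = expectation (\<lambda>\<omega>. (\<Sum>i\<in>I. Y i \<omega> - m)\<^sup>2)"
    unfolding ES S_def using \<open>finite I\<close> by (simp add: sum_subtractf)
  also have "\<dots> = (\<Sum>i\<in>I. expectation (\<lambda>\<omega>. (Y i \<omega> - m)\<^sup>2))"
  proof (rule integral_square_sum_indep[OF \<open>finite I\<close>])
    show "indep_vars (\<lambda>_. borel) (\<lambda>i \<omega>. Y i \<omega> - m) I"
      using indep by (rule indep_vars_compose2[where X=Y]) measurable
    show "\<bar>Y i \<omega> - m\<bar> \<le> B + \<bar>m\<bar>" for i \<omega>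
      using bounded[of i \<omega>] by linarith
    show "expectation (\<lambda>\<omega>. Y i \<omega> - m) = 0" if "i \<in> I" for i
      using intY[OF that] mean[OF that] by (simp add: prob_space)
  qed
  also have "\<dots> \<le> (\<Sum>i\<in>I. s)"
  proof (rule sum_mono)
    fix i assume i: "i \<in> I"
    have "expectation (\<lambda>\<omega>. (Y i \<omega> - m)\<^sup>2) = variance (Y i)"
      using mean[OF i] by simp
    also have "\<dots> = expectation (\<lambda>\<omega>. (Y i \<omega>)\<^sup>2) - (expectation (Y i))\<^sup>2"
      by (rule variance_eq[OF intY[OF i] intY2[OF i]])
    finally show "expectation (\<lambda>\<omega>. (Y i \<omega> - m)\<^sup>2) \<le> s"
      using second_moment[OF i] zero_le_power2[of "expectation (Y i)"] by linarith
  qed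
  finally have "variance S \<le> real (card I) * s"
    by simp
  have "prob {\<omega>\<in>space M. c \<le> \<bar>S \<omega> - expectation S\<bar>} \<le> variance S / c\<^sup>2"
    using intS2 \<open>0 < c\<close> by (intro Chebyshev_inequality) auto
  also have "\<dots> \<le> real (card I) * s / c\<^sup>2"
    using \<open>variance S \<le> real (card I) * s\<close> by (intro divide_right_mono) auto
  finally show ?thesis
    unfolding ES S_def .
qed

lemma (in prob_space) prob_truncated_sum_deviation_le:
  fixes X :: "'i \<Rightarrow> 'a \<Rightarrow> real" and D :: "real measure"
  assumes "finite I" and indep: "indep_vars (\<lambda>_. borel) X I"
    and dist: "\<And>i. i \<in> I \<Longrightarrow> distr M borel (X i) = D" and [measurable_cong]: "sets D = sets borel"
    and "0 \<le> t" "0 < c"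
  shows "prob {\<omega>\<in>space M. c \<le> \<bar>(\<Sum>i\<in>I. trunc t (X i \<omega>)) - real (card I) * (\<integral>x. trunc t x \<partial>D)\<bar>}
    \<le> real (card I) * (\<integral>x. (trunc t x)\<^sup>2 \<partial>D) / c\<^sup>2"
proof (rule prob_sum_deviation_le[OF \<open>finite I\<close> _ _ _ _ \<open>0 < c\<close>])
  have measX: "X i \<in> borel_measurable M" if "i \<in> I" for i
    using indep that unfolding indep_vars_def by auto
  have law: "expectation (\<lambda>\<omega>. f (trunc t (X i \<omega>))) = (\<integral>x. f (trunc t x) \<partial>D)"
    if "i \<in> I" and "f \<in> borel_measurable borel" for i and f :: "real \<Rightarrow> real"
  proof -
    have "(\<lambda>x. f (trunc t x)) \<in> borel_measurable borel"
      using that(2) by measurable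
    from integral_distr[OF measX[OF that(1)] this]
    show ?thesis unfolding dist[OF that(1)] by simp
  qed
  show "indep_vars (\<lambda>_. borel) (\<lambda>i \<omega>. trunc t (X i \<omega>)) I"
    using indep by (rule indep_vars_compose2[where X=X]) measurable
  show "\<bar>trunc t (X i \<omega>)\<bar> \<le> t" for i \<omega>
    using abs_trunc_le_bound[OF \<open>0 \<le> t\<close>] .
  show "expectation (\<lambda>\<omega>. trunc t (X i \<omega>)) = (\<integral>x. trunc t x \<partial>D)" if "i \<in> I" for i
    using law[OF that, of "\<lambda>x. x"] by simp
  show "expectation (\<lambda>\<omega>. (trunc t (X i \<omega>))\<^sup>2) \<le> (\<integral>x. (trunc t x)\<^sup>2 \<partial>D)" if "i \<in> I" for i
    using law[OF that, of "\<lambda>x. x\<^sup>2"] by simp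
qed

text \<open>Truncation at level t: outside the event that some summand exceeds t, the sum coincides with
  the truncated sum, whose deviation is controlled by Chebyshev's inequality.\<close>
lemma (in prob_space) prob_sum_deviation_le_truncated:
  fixes X :: "'i \<Rightarrow> 'a \<Rightarrow> real" and D :: "real measure"
  assumes "finite I" "0 < card I" and indep: "indep_vars (\<lambda>_. borel) X I"
    and dist: "\<And>i. i \<in> I \<Longrightarrow> distr M borel (X i) = D" and sets_D[measurable_cong]: "sets D = sets borel"
    and "0 < \<epsilon>" "0 \<le> t" and mean_close: "\<bar>(\<integral>x. trunc t x \<partial>D) - (\<integral>x. x \<partial>D)\<bar> \<le> \<epsilon> / 2"
  shows "prob {\<omega>\<in>space M. \<epsilon> * real (card I) < \<bar>(\<Sum>i\<in>I. X i \<omega>) - real (card I) * (\<integral>x. x \<partial>D)\<bar>}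
    \<le> real (card I) * measure D {x. t < \<bar>x\<bar>}
      + real (card I) * (\<integral>x. (trunc t x)\<^sup>2 \<partial>D) / (\<epsilon> * real (card I) / 2)\<^sup>2"
proof -
  define k where "k = real (card I)"
  define a where "a = (\<integral>x. x \<partial>D)"
  define m where "m = (\<integral>x. trunc t x \<partial>D)"
  define E where "E = {\<omega>\<in>space M. \<epsilon> * k < \<bar>(\<Sum>i\<in>I. X i \<omega>) - k * a\<bar>}"
  define A where "A = (\<Union>i\<in>I. {\<omega>\<in>space M. t < \<bar>X i \<omega>\<bar>})"
  define B where "B = {\<omega>\<in>space M. \<epsilon> * k / 2 \<le> \<bar>(\<Sum>i\<in>I. trunc t (X i \<omega>)) - k * m\<bar>}"
  have [measurable]: "X i \<in> borel_measurable M" if "i \<in> I" for i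
    using indep that unfolding indep_vars_def by auto
  have A_sets: "A \<in> sets M"
    unfolding A_def using \<open>finite I\<close> by (intro sets.finite_UN) auto
  have "(\<lambda>\<omega>. \<Sum>i\<in>I. trunc t (X i \<omega>)) \<in> borel_measurable M"
    by (intro borel_measurable_sum) auto
  then have B_sets: "B \<in> sets M"
    unfolding B_def by measurable
  have "E \<subseteq> A \<union> B"
  proof
    fix \<omega> assume \<omega>: "\<omega> \<in> E"
    show "\<omega> \<in> A \<union> B"
    proof (cases "\<omega> \<in> A")
      case False
      then have trunc_eq: "(\<Sum>i\<in>I. trunc t (X i \<omega>)) = (\<Sum>i\<in>I. X i \<omega>)"
        using \<omega> unfolding A_def E_def trunc_def by (auto intro!: sum.cong)
      have "(\<Sum>i\<in>I. X i \<omega>) - k * a = ((\<Sum>i\<in>I. X i \<omega>) - k * m) + k * (m - a)"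
        by (simp add: algebra_simps)
      then have "\<epsilon> * k < \<bar>(\<Sum>i\<in>I. X i \<omega>) - k * m\<bar> + \<bar>k * (m - a)\<bar>"
        using \<omega> abs_triangle_ineq[of "(\<Sum>i\<in>I. X i \<omega>) - k * m" "k * (m - a)"]
        unfolding E_def by auto
      moreover have "\<bar>k * (m - a)\<bar> \<le> \<epsilon> * k / 2"
      proof -
        have "\<bar>k * (m - a)\<bar> = k * \<bar>m - a\<bar>" unfolding k_def by (simp add: abs_mult)
        also have "\<dots> \<le> k * (\<epsilon> / 2)" using mean_close unfolding k_def m_def a_def by (intro mult_left_mono) auto
        finally show ?thesis by (simp add: mult.commute)
      qed
      ultimately have "\<epsilon> * k / 2 \<le> \<bar>(\<Sum>i\<in>I. X i \<omega>) - k * m\<bar>"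
        by linarith
      then show ?thesis
        using \<omega> trunc_eq unfolding B_def E_def by auto
    qed simp
  qed
  then have "prob E \<le> prob A + prob B"
    using A_sets B_sets by (intro order_trans[OF finite_measure_mono measure_Un_le]) auto
  also have "prob A \<le> k * measure D {x. t < \<bar>x\<bar>}"
    unfolding A_def k_def using \<open>finite I\<close> dist by (intro prob_exists_abs_gt_le) auto
  also have "prob B \<le> k * (\<integral>x. (trunc t x)\<^sup>2 \<partial>D) / (\<epsilon> * k / 2)\<^sup>2"
    unfolding B_def k_def m_def using assms(1-4) \<open>0 < \<epsilon>\<close> \<open>0 \<le> t\<close>
    by (intro prob_truncated_sum_deviation_le sets_D) auto
  finally show ?thesis
    unfolding E_def k_def a_def by simp
qed

lemma (in prob_space) wlln_rate:
  fixes X :: "'i \<Rightarrow> 'a \<Rightarrow> real" and D :: "real measure"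
  assumes indep: "indep_vars (\<lambda>_. borel) X J"
    and dist: "\<And>j. j \<in> J \<Longrightarrow> distr M borel (X j) = D"
    and "prob_space D" and sets_D[measurable_cong]: "sets D = sets borel"
    and "integrable D (\<lambda>x. x)" and "0 < \<epsilon>"
  shows "\<exists>f. f \<longlonglongrightarrow> 0 \<and> (\<forall>I. I \<subseteq> J \<longrightarrow> finite I \<longrightarrow>
           prob {\<omega>\<in>space M. \<epsilon> * real (card I) < \<bar>(\<Sum>i\<in>I. X i \<omega>) - real (card I) * (\<integral>x. x \<partial>D)\<bar>}
             \<le> f (card I))"
proof -
  define a where "a = (\<integral>x. x \<partial>D)"
  define tl where "tl n = measure D {x. real n < \<bar>x\<bar>}" for n
  define mm where "mm n = (\<integral>x. trunc (real n) x \<partial>D)" for n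
  define ss where "ss n = (\<integral>x. (trunc (real n) x)\<^sup>2 / real n \<partial>D)" for n
  define f where "f n = real n * tl n + 4 / \<epsilon>\<^sup>2 * ss n + (if \<epsilon>/2 < \<bar>mm n - a\<bar> then 1 else 0)" for n
  have ss_nonneg: "0 \<le> ss n" for n
    unfolding ss_def by (intro integral_nonneg_AE) auto
  have "\<forall>\<^sub>F n in sequentially. \<bar>mm n - a\<bar> < \<epsilon>/2"
    using truncated_mean_tendsto[OF assms(4,5), THEN tendsto_diff[OF _ tendsto_const], THEN tendsto_rabs]
      \<open>0 < \<epsilon>\<close>
    unfolding mm_def a_def by (intro order_tendstoD(2)) auto
  then have "\<forall>\<^sub>F n in sequentially. 0 = (if \<epsilon>/2 < \<bar>mm n - a\<bar> then 1 else (0::real))"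
    by eventually_elim auto
  then have "(\<lambda>n. if \<epsilon>/2 < \<bar>mm n - a\<bar> then 1 else (0::real)) \<longlonglongrightarrow> 0"
    by (rule Lim_transform_eventually[OF tendsto_const])
  then have "f \<longlonglongrightarrow> 0 + 4 / \<epsilon>\<^sup>2 * 0 + 0"
    unfolding f_def tl_def ss_def
    by (intro tendsto_add tendsto_mult tendsto_const tail_measure_o_n truncated_second_moment_o_n assms)
  moreover have "prob {\<omega>\<in>space M. \<epsilon> * real (card I) < \<bar>(\<Sum>i\<in>I. X i \<omega>) - real (card I) * a\<bar>}
      \<le> f (card I)" if "I \<subseteq> J" "finite I" for I
  proof -
    define t where "t = card I"
    consider "t = 0" | "\<epsilon>/2 < \<bar>mm t - a\<bar>" | "0 < t" "\<bar>mm t - a\<bar> \<le> \<epsilon>/2"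
      by linarith
    then show ?thesis
    proof cases
      case 1
      then show ?thesis
        using \<open>finite I\<close> ss_nonneg[of 0] \<open>0 < \<epsilon>\<close> unfolding t_def f_def tl_def by simp
    next
      case 2
      have "prob {\<omega>\<in>space M. \<epsilon> * real (card I) < \<bar>(\<Sum>i\<in>I. X i \<omega>) - real (card I) * a\<bar>} \<le> 1"
        by simp
      also have "1 \<le> f (card I)"
        using 2 ss_nonneg[of t] \<open>0 < \<epsilon>\<close> unfolding f_def tl_def t_def by auto
      finally show ?thesis .
    next
      case 3
      have "real t * (\<integral>x. (trunc (real t) x)\<^sup>2 \<partial>D) / (\<epsilon> * real t / 2)\<^sup>2 = 4 / \<epsilon>\<^sup>2 * ss t"
        using 3 \<open>0 < \<epsilon>\<close> unfolding ss_def by (simp add: field_simps power2_eq_square)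
      then show ?thesis
        using prob_sum_deviation_le_truncated[OF \<open>finite I\<close> _ indep_vars_subset[OF indep \<open>I \<subseteq> J\<close>] _ sets_D
            \<open>0 < \<epsilon>\<close>, of "real t"] 3 dist \<open>I \<subseteq> J\<close>
        unfolding t_def f_def tl_def mm_def a_def by auto
    qed
  qed
  ultimately show ?thesis
    unfolding a_def by force
qed

lemma ex_bracketing_index:
  fixes g :: "nat \<Rightarrow> nat"
  assumes "g 0 \<le> m" "m \<le> g K" "0 < K"
  shows "\<exists>l<K. g l \<le> m \<and> m \<le> g (Suc l)"
  using assms
proof (induction K)
  case 0
  then show ?case by simp
next
  case (Suc K)
  show ?case
  proof (cases "g K \<le> m")
    case True
    then show ?thesis using Suc.prems(2) by auto
  next
    case False
    with Suc.prems(1) have "0 < K" by (cases K) auto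
    with False Suc.IH Suc.prems(1) obtain l where "l < K" "g l \<le> m" "m \<le> g (Suc l)"
      by fastforce
    then show ?thesis by (intro exI[of _ l]) auto
  qed
qed

lemma abs_deviation_le_of_sandwich:
  fixes T :: "nat \<Rightarrow> real"
  assumes "p \<le> m" "m \<le> q" "T p \<le> T m" "T m \<le> T q" "0 \<le> b" "0 \<le> \<epsilon>"
    and dev_p: "\<bar>T p - real p * b\<bar> \<le> \<epsilon> * real p" and dev_q: "\<bar>T q - real q * b\<bar> \<le> \<epsilon> * real q"
  shows "\<bar>T m - real m * b\<bar> \<le> (real q - real p) * b + \<epsilon> * real q"
proof -
  have "real p * b \<le> real m * b" "real m * b \<le> real q * b"
    using assms(1,2,5) by (auto intro: mult_right_mono)
  moreover have "\<epsilon> * real p \<le> \<epsilon> * real q"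
    using assms(1,2,6) by (auto intro: mult_left_mono)
  ultimately show ?thesis
    using assms(3,4) dev_p dev_q by (simp add: left_diff_distrib abs_le_iff)
qed

text \<open>Monotonicity transfers a deviation bound at the grid points l n div K (with l \<ge> \<gamma> K / 2)
  to every m \<in> [\<gamma> n, n].\<close>
lemma grid_deviation_le:
  fixes T :: "nat \<Rightarrow> real"
  assumes mono: "\<And>a c. a \<le> c \<Longrightarrow> c \<le> n \<Longrightarrow> T a \<le> T c"
    and "0 \<le> b" "0 \<le> \<epsilon>" "2 \<le> \<gamma> * real K" "0 < n" "\<gamma> * real n \<le> real m" "m \<le> n"
    and grid: "\<And>l. l \<le> K \<Longrightarrow> \<gamma> * real K \<le> 2 * real l \<Longrightarrow>
       \<bar>T (l * n div K) - real (l * n div K) * b\<bar> \<le> \<epsilon> * real (l * n div K)"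
  shows "\<bar>T m - real m * b\<bar> \<le> (real n / real K + 1) * b + \<epsilon> * (real m + real n / real K + 1)"
proof -
  have "0 < K" using assms(4) by (cases K) auto
  define g where "g l = l * n div K" for l
  obtain l where l: "l < K" "g l \<le> m" "m \<le> g (Suc l)"
    using ex_bracketing_index[of g m K] \<open>0 < K\<close> \<open>m \<le> n\<close> unfolding g_def by auto
  have upper: "real (g (Suc l)) \<le> real (Suc l) * real n / real K"
    unfolding g_def using of_nat_div_le_of_nat[of "Suc l * n" K] by (simp add: ring_distribs)
  have lower: "real l * real n / real K < real (g l) + 1"
  proof -
    have "real (l * n mod K) < real K" using \<open>0 < K\<close> by simp
    then have "real (l * n mod K) / real K < 1" using \<open>0 < K\<close> by simp
    then show ?thesis
      using of_nat_of_nat_div_aux[where 'a=real, of "l * n" K] unfolding g_def by simp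
  qed
  have gap: "real (g (Suc l)) - real (g l) \<le> real n / real K + 1"
  proof -
    have "real (Suc l) * real n / real K = real n / real K + real l * real n / real K"
      by (simp add: add_divide_distrib ring_distribs)
    then show ?thesis using upper lower by linarith
  qed
  have "Suc l * n \<le> K * n"
    using \<open>l < K\<close> by (intro mult_le_mono1) simp
  then have "g (Suc l) \<le> n"
    using div_le_mono[of "Suc l * n" "K * n" K] \<open>0 < K\<close> unfolding g_def by simp
  have "\<gamma> * real n \<le> real (Suc l) * real n / real K"
    using assms(6) l(3) upper by linarith
  then have "(\<gamma> * real K) * real n \<le> real (Suc l) * real n"
    using \<open>0 < K\<close> by (simp add: field_simps)
  then have "\<gamma> * real K \<le> real (Suc l)"
    using \<open>0 < n\<close> by simp
  then have "\<gamma> * real K \<le> 2 * real l"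
    using assms(4) by simp
  moreover from this have "\<gamma> * real K \<le> 2 * real (Suc l)"
    by simp
  ultimately have "\<bar>T m - real m * b\<bar> \<le> (real (g (Suc l)) - real (g l)) * b + \<epsilon> * real (g (Suc l))"
    using l \<open>g (Suc l) \<le> n\<close> \<open>m \<le> n\<close> \<open>l < K\<close> \<open>0 \<le> b\<close> \<open>0 \<le> \<epsilon>\<close> unfolding g_def
    by (intro abs_deviation_le_of_sandwich mono grid) auto
  also have "\<dots> \<le> (real n / real K + 1) * b + \<epsilon> * (real m + real n / real K + 1)"
    using gap l(2) \<open>0 \<le> b\<close> \<open>0 \<le> \<epsilon>\<close> by (intro add_mono mult_right_mono mult_left_mono) auto
  finally show ?thesis .
qed

definition nested_family :: "'i set \<Rightarrow> nat \<Rightarrow> (nat \<Rightarrow> 'i set) \<Rightarrow> bool" where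
  "nested_family J n Is \<longleftrightarrow> (\<forall>m\<le>n. Is m \<subseteq> J \<and> finite (Is m) \<and> card (Is m) = m)
     \<and> (\<forall>a c. a \<le> c \<longrightarrow> c \<le> n \<longrightarrow> Is a \<subseteq> Is c)"

definition window_deviation :: "'a measure \<Rightarrow> ('i \<Rightarrow> 'a \<Rightarrow> real) \<Rightarrow> (nat \<Rightarrow> 'i set)
    \<Rightarrow> nat \<Rightarrow> real \<Rightarrow> real \<Rightarrow> real \<Rightarrow> 'a set" where
  "window_deviation M X Is n \<gamma> \<eta> b = {\<omega>\<in>space M. \<exists>m. \<gamma> * real n \<le> real m \<and> m \<le> n \<and>
     \<eta> * real m < \<bar>(\<Sum>i\<in>Is m. X i \<omega>) - real m * b\<bar>}"

lemma window_deviation_sets: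
  assumes "\<And>i. i \<in> J \<Longrightarrow> X i \<in> borel_measurable M" and "\<And>m. m \<le> n \<Longrightarrow> Is m \<subseteq> J"
  shows "window_deviation M X Is n \<gamma> \<eta> b \<in> sets M"
proof -
  have "window_deviation M X Is n \<gamma> \<eta> b = (\<Union>m\<in>{m. m \<le> n \<and> \<gamma> * real n \<le> real m}.
      {\<omega>\<in>space M. \<eta> * real m < \<bar>(\<Sum>i\<in>Is m. X i \<omega>) - real m * b\<bar>})"
    unfolding window_deviation_def by auto
  also have "\<dots> \<in> sets M"
  proof (intro sets.finite_UN ballI)
    fix m assume "m \<in> {m. m \<le> n \<and> \<gamma> * real n \<le> real m}"
    then have "(\<lambda>\<omega>. \<Sum>i\<in>Is m. X i \<omega>) \<in> borel_measurable M"
      using assms by (intro borel_measurable_sum) auto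
    then show "{\<omega>\<in>space M. \<eta> * real m < \<bar>(\<Sum>i\<in>Is m. X i \<omega>) - real m * b\<bar>} \<in> sets M"
      by measurable
  qed auto
  finally show ?thesis .
qed

lemma tendsto_sum_grid_rate:
  fixes f :: "nat \<Rightarrow> real"
  assumes "f \<longlonglongrightarrow> 0" "finite L" "\<And>l. l \<in> L \<Longrightarrow> 0 < l" "0 < K"
  shows "(\<lambda>n. \<Sum>l\<in>L. f (l * n div K)) \<longlonglongrightarrow> 0"
proof -
  have "(\<lambda>n. f (l * n div K)) \<longlonglongrightarrow> 0" if "l \<in> L" for l
  proof (rule filterlim_compose[OF assms(1)])
    show "filterlim (\<lambda>n. l * n div K) at_top sequentially"
      unfolding filterlim_at_top eventually_sequentially
    proof (intro allI exI impI)
      fix N n :: nat assume "N * K \<le> n"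
      also have "n \<le> l * n" using assms(3)[OF that] by simp
      finally show "N \<le> l * n div K"
        using div_le_mono[of "N * K" "l * n" K] \<open>0 < K\<close> by simp
    qed
  qed
  then have "(\<lambda>n. \<Sum>l\<in>L. f (l * n div K)) \<longlonglongrightarrow> (\<Sum>l\<in>L. 0)"
    by (intro tendsto_sum)
  then show ?thesis by simp
qed

lemma tendsto_if_less_linear:
  fixes a c :: real
  assumes "0 < a"
  shows "(\<lambda>n. if a * real n < c then 1 else 0::real) \<longlonglongrightarrow> 0"
proof (rule tendsto_eventually)
  obtain N :: nat where "c / a \<le> real N"
    using real_arch_simple by blast
  then have "c \<le> a * real N"
    using assms by (simp add: pos_divide_le_eq mult.commute)
  moreover have "a * real N \<le> a * real n" if "N \<le> n" for n
    using that assms by (intro mult_left_mono) auto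
  ultimately have "\<not> a * real n < c" if "N \<le> n" for n
    using that by (meson le_less_trans less_le_not_le)
  then show "\<forall>\<^sub>F n in sequentially. (if a * real n < c then 1 else 0::real) = 0"
    unfolding eventually_sequentially by auto
qed

lemma grid_error_le:
  fixes b \<epsilon> \<eta> \<gamma> :: real and n m K :: nat
  assumes "0 < \<gamma>" "0 < K" "0 \<le> b" "0 \<le> \<epsilon>" "4 * \<epsilon> \<le> \<eta>" "\<gamma> * real n \<le> real m"
    and K: "4 * (b + \<epsilon>) \<le> \<eta> * (\<gamma> * real K)" and n: "4 * (b + \<epsilon>) \<le> \<eta> * (\<gamma> * real n)"
  shows "(real n / real K + 1) * b + \<epsilon> * (real m + real n / real K + 1) \<le> \<eta> * real m"
proof -
  have "real n \<le> real m / \<gamma>"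
    using assms(1,6) by (simp add: field_simps)
  then have "real n / real K * (b + \<epsilon>) \<le> real m / \<gamma> / real K * (b + \<epsilon>)"
    using assms(3,4) by (intro mult_right_mono divide_right_mono) auto
  also have "\<dots> = real m * (4 * (b + \<epsilon>)) / (4 * (\<gamma> * real K))"
    using assms(1,2) by (simp add: field_simps)
  also have "\<dots> \<le> real m * (\<eta> * (\<gamma> * real K)) / (4 * (\<gamma> * real K))"
    using K assms(1,2) by (intro divide_right_mono mult_left_mono) auto
  also have "\<dots> = \<eta> * real m / 4"
    using assms(1,2) by simp
  finally have A: "real n / real K * (b + \<epsilon>) \<le> \<eta> * real m / 4" .
  have "\<eta> * (\<gamma> * real n) \<le> \<eta> * real m"
    using assms(1,4,5,6) by (intro mult_left_mono) auto
  with n have "4 * (b + \<epsilon>) \<le> \<eta> * real m"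
    by (rule order_trans)
  then have B: "b + \<epsilon> \<le> \<eta> * real m / 4"
    by simp
  have "(4 * \<epsilon>) * real m \<le> \<eta> * real m"
    using assms(5) by (rule mult_right_mono) simp
  then have C: "\<epsilon> * real m \<le> \<eta> * real m / 4"
    by simp
  have "(real n / real K + 1) * b + \<epsilon> * (real m + real n / real K + 1)
      = real n / real K * (b + \<epsilon>) + (b + \<epsilon>) + \<epsilon> * real m"
    by (simp add: algebra_simps add_divide_distrib)
  also have "\<dots> \<le> \<eta> * real m / 4 + \<eta> * real m / 4 + \<eta> * real m / 4"
    using A B C by (intro add_mono)
  also have "\<dots> \<le> \<eta> * real m"
    using assms(4,5) by simp
  finally show ?thesis .
qed

lemma window_deviation_subset_grid:
  fixes X :: "'i \<Rightarrow> 'a \<Rightarrow> real"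
  assumes Is: "nested_family J n Is" and nonneg: "\<And>j \<omega>. j \<in> J \<Longrightarrow> \<omega> \<in> space M \<Longrightarrow> 0 \<le> X j \<omega>"
    and "0 \<le> b" "0 < \<gamma>" "0 < \<eta>" "0 < n" "2 \<le> \<gamma> * real K"
    and K: "4 * (b + \<eta> / 4) \<le> \<eta> * (\<gamma> * real K)" and n: "4 * (b + \<eta> / 4) \<le> \<eta> * (\<gamma> * real n)"
  shows "window_deviation M X Is n \<gamma> \<eta> b \<subseteq> (\<Union>l\<in>{l. l \<le> K \<and> \<gamma> * real K \<le> 2 * real l}.
    {\<omega>\<in>space M. \<eta> / 4 * real (l * n div K) < \<bar>(\<Sum>i\<in>Is (l * n div K). X i \<omega>) - real (l * n div K) * b\<bar>})"
    (is "_ \<subseteq> ?grid")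
proof
  fix \<omega> assume "\<omega> \<in> window_deviation M X Is n \<gamma> \<eta> b"
  then obtain m where \<omega>: "\<omega> \<in> space M" and m: "\<gamma> * real n \<le> real m" "m \<le> n"
    and dev: "\<eta> * real m < \<bar>(\<Sum>i\<in>Is m. X i \<omega>) - real m * b\<bar>"
    unfolding window_deviation_def by auto
  show "\<omega> \<in> ?grid"
  proof (rule ccontr)
    assume good: "\<omega> \<notin> ?grid"
    have "0 < K" using \<open>2 \<le> \<gamma> * real K\<close> by (cases K) auto
    define T where "T k = (\<Sum>i\<in>Is k. X i \<omega>)" for k
    have "\<bar>T m - real m * b\<bar> \<le> (real n / real K + 1) * b + \<eta> / 4 * (real m + real n / real K + 1)"
    proof (rule grid_deviation_le[OF _ \<open>0 \<le> b\<close> _ \<open>2 \<le> \<gamma> * real K\<close> \<open>0 < n\<close> m])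
      show "T a \<le> T c" if "a \<le> c" "c \<le> n" for a c
        unfolding T_def using Is that nonneg \<omega>
        by (intro sum_mono2) (auto simp: nested_family_def)
      show "\<bar>T (l * n div K) - real (l * n div K) * b\<bar> \<le> \<eta> / 4 * real (l * n div K)"
        if "l \<le> K" "\<gamma> * real K \<le> 2 * real l" for l
        using good \<omega> that unfolding T_def by (auto simp: not_less)
    qed (use \<open>0 < \<eta>\<close> in simp)
    also have "\<dots> \<le> \<eta> * real m"
      using \<open>0 < \<gamma>\<close> \<open>0 < K\<close> \<open>0 \<le> b\<close> \<open>0 < \<eta>\<close> m(1) K n by (intro grid_error_le) auto
    finally show False
      using dev unfolding T_def by simp
  qed
qed

lemma (in prob_space) prob_window_deviation_le_grid:
  fixes X :: "'i \<Rightarrow> 'a \<Rightarrow> real"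
  assumes Is: "nested_family J n Is" and measX: "\<And>j. j \<in> J \<Longrightarrow> X j \<in> borel_measurable M"
    and nonneg: "\<And>j \<omega>. j \<in> J \<Longrightarrow> \<omega> \<in> space M \<Longrightarrow> 0 \<le> X j \<omega>"
    and f_bound: "\<And>I. I \<subseteq> J \<Longrightarrow> finite I \<Longrightarrow>
      prob {\<omega>\<in>space M. \<eta> / 4 * real (card I) < \<bar>(\<Sum>i\<in>I. X i \<omega>) - real (card I) * b\<bar>} \<le> f (card I)"
    and "0 \<le> b" "0 < \<gamma>" "0 < \<eta>" "0 < n" "2 \<le> \<gamma> * real K"
    and K: "4 * (b + \<eta> / 4) \<le> \<eta> * (\<gamma> * real K)" and n: "4 * (b + \<eta> / 4) \<le> \<eta> * (\<gamma> * real n)"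
  shows "prob (window_deviation M X Is n \<gamma> \<eta> b) \<le> (\<Sum>l\<in>{l. l \<le> K \<and> \<gamma> * real K \<le> 2 * real l}. f (l * n div K))"
proof -
  define L where "L = {l. l \<le> K \<and> \<gamma> * real K \<le> 2 * real l}"
  define p where "p l = l * n div K" for l
  define Bad where "Bad l = {\<omega>\<in>space M. \<eta> / 4 * real (p l) < \<bar>(\<Sum>i\<in>Is (p l). X i \<omega>) - real (p l) * b\<bar>}" for l
  have "0 < K" using \<open>2 \<le> \<gamma> * real K\<close> by (cases K) auto
  have "finite L" unfolding L_def by simp
  have Is_p: "Is (p l) \<subseteq> J" "finite (Is (p l))" "card (Is (p l)) = p l" if "l \<in> L" for l
  proof -
    have "p l \<le> n"
      using div_le_mono[of "l * n" "K * n" K] that \<open>0 < K\<close> unfolding p_def L_def by simp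
    then show "Is (p l) \<subseteq> J" "finite (Is (p l))" "card (Is (p l)) = p l"
      using Is unfolding nested_family_def by auto
  qed
  have Bad_sets: "Bad l \<in> sets M" if "l \<in> L" for l
  proof -
    have "(\<lambda>\<omega>. \<Sum>i\<in>Is (p l). X i \<omega>) \<in> borel_measurable M"
      using Is_p[OF that] measX by (intro borel_measurable_sum) auto
    then show ?thesis unfolding Bad_def by measurable
  qed
  have "window_deviation M X Is n \<gamma> \<eta> b \<subseteq> (\<Union>l\<in>L. Bad l)"
    using window_deviation_subset_grid[where M=M, OF Is nonneg assms(5-11)]
    unfolding L_def Bad_def p_def .
  then have "prob (window_deviation M X Is n \<gamma> \<eta> b) \<le> prob (\<Union>l\<in>L. Bad l)"
    using Bad_sets \<open>finite L\<close> by (intro finite_measure_mono sets.finite_UN) auto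
  also have "\<dots> \<le> (\<Sum>l\<in>L. prob (Bad l))"
    using Bad_sets \<open>finite L\<close> by (intro finite_measure_subadditive_finite) auto
  also have "\<dots> \<le> (\<Sum>l\<in>L. f (p l))"
    using f_bound[OF Is_p(1,2)] Is_p(3) unfolding Bad_def by (intro sum_mono) simp
  finally show ?thesis
    unfolding L_def p_def .
qed

lemma (in prob_space) window_lln_nonneg:
  fixes X :: "'i \<Rightarrow> 'a \<Rightarrow> real" and X0 :: "'a \<Rightarrow> real"
  assumes indep: "indep_vars (\<lambda>_. borel) X J" and [measurable]: "X0 \<in> borel_measurable M"
    and dist: "\<And>j. j \<in> J \<Longrightarrow> distr M borel (X j) = distr M borel X0"
    and "integrable M X0"
    and nonneg: "\<And>j \<omega>. j \<in> J \<Longrightarrow> \<omega> \<in> space M \<Longrightarrow> 0 \<le> X j \<omega>"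
    and "\<And>\<omega>. \<omega> \<in> space M \<Longrightarrow> 0 \<le> X0 \<omega>"
    and "0 < \<gamma>" "0 < \<eta>"
  shows "\<exists>g. g \<longlonglongrightarrow> 0 \<and>
    (\<forall>n Is. nested_family J n Is \<longrightarrow> prob (window_deviation M X Is n \<gamma> \<eta> (expectation X0)) \<le> g n)"
proof -
  define b where "b = expectation X0"
  define c where "c = 4 * (b + \<eta> / 4)"
  have "0 \<le> b"
    unfolding b_def using assms(6) by (auto intro: integral_nonneg_AE)
  have measX: "X j \<in> borel_measurable M" if "j \<in> J" for j
    using indep that unfolding indep_vars_def by auto
  have mean: "(\<integral>x. x \<partial>distr M borel X0) = b"
    unfolding b_def by (rule integral_distr) simp_all
  have int_D: "integrable (distr M borel X0) (\<lambda>x. x)"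
    using \<open>integrable M X0\<close> by (subst integrable_distr_eq) simp_all
  from \<open>0 < \<eta>\<close> have "0 < \<eta> / 4" by simp
  from wlln_rate[OF indep dist prob_space_distr _ int_D this, unfolded mean]
  obtain f where "f \<longlonglongrightarrow> 0" and f: "\<And>I. I \<subseteq> J \<Longrightarrow> finite I \<Longrightarrow>
      prob {\<omega>\<in>space M. \<eta> / 4 * real (card I) < \<bar>(\<Sum>i\<in>I. X i \<omega>) - real (card I) * b\<bar>} \<le> f (card I)"
    by auto
  have f_bound: "prob {\<omega>\<in>space M. \<eta> / 4 * real (card I) < \<bar>(\<Sum>i\<in>I. X i \<omega>) - real (card I) * b\<bar>}
      \<le> max 0 (f (card I))" if "I \<subseteq> J" "finite I" for I
    using f[OF that] by linarith
  obtain K :: nat where K: "2 / \<gamma> \<le> real K" "c / (\<eta> * \<gamma>) \<le> real K"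
    using real_arch_simple[of "max (2 / \<gamma>) (c / (\<eta> * \<gamma>))"] by auto
  have "2 \<le> \<gamma> * real K" "c \<le> \<eta> * (\<gamma> * real K)"
    using K \<open>0 < \<gamma>\<close> \<open>0 < \<eta>\<close> by (simp_all add: pos_divide_le_eq mult.commute mult.left_commute)
  then have "0 < K" by (cases K) auto
  define L where "L = {l. l \<le> K \<and> \<gamma> * real K \<le> 2 * real l}"
  have L_pos: "0 < l" if "l \<in> L" for l
  proof -
    have "2 \<le> 2 * real l"
      using that \<open>2 \<le> \<gamma> * real K\<close> unfolding L_def by auto
    then show ?thesis by simp
  qed
  define g where "g n = (\<Sum>l\<in>L. max 0 (f (l * n div K))) + (if \<eta> * \<gamma> * real n < c then 1 else 0)" for n
  have "g \<longlonglongrightarrow> 0 + 0"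
  proof (unfold g_def, rule tendsto_add)
    show "(\<lambda>n. \<Sum>l\<in>L. max 0 (f (l * n div K))) \<longlonglongrightarrow> 0"
      using tendsto_max[OF tendsto_const \<open>f \<longlonglongrightarrow> 0\<close>, of 0] \<open>0 < K\<close>
      by (intro tendsto_sum_grid_rate) (auto simp: L_def intro: L_pos)
    show "(\<lambda>n. if \<eta> * \<gamma> * real n < c then 1 else 0::real) \<longlonglongrightarrow> 0"
      using \<open>0 < \<gamma>\<close> \<open>0 < \<eta>\<close> by (intro tendsto_if_less_linear) simp
  qed
  moreover have "prob (window_deviation M X Is n \<gamma> \<eta> b) \<le> g n" if Is: "nested_family J n Is" for n Is
  proof (cases "\<eta> * \<gamma> * real n < c")
    case True
    have "prob (window_deviation M X Is n \<gamma> \<eta> b) \<le> 1" by simp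
    also have "1 \<le> g n"
      using True unfolding g_def by (simp add: sum_nonneg)
    finally show ?thesis .
  next
    case False
    then have "0 < n"
      using \<open>0 \<le> b\<close> \<open>0 < \<eta>\<close> unfolding c_def by (cases n) auto
    have "prob (window_deviation M X Is n \<gamma> \<eta> b) \<le> (\<Sum>l\<in>L. max 0 (f (l * n div K)))"
      unfolding L_def
    proof (rule prob_window_deviation_le_grid[OF Is measX nonneg f_bound \<open>0 \<le> b\<close> \<open>0 < \<gamma>\<close> \<open>0 < \<eta>\<close>
          \<open>0 < n\<close> \<open>2 \<le> \<gamma> * real K\<close>])
      show "4 * (b + \<eta> / 4) \<le> \<eta> * (\<gamma> * real K)" "4 * (b + \<eta> / 4) \<le> \<eta> * (\<gamma> * real n)"
        using False \<open>c \<le> \<eta> * (\<gamma> * real K)\<close> unfolding c_def by (simp_all add: mult.assoc)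
    qed
    then show ?thesis
      using False unfolding g_def by simp
  qed
  ultimately show ?thesis
    unfolding b_def by auto
qed

lemma distr_compose_eq:
  assumes [measurable]: "X \<in> measurable M N" "Y \<in> measurable M N" "F \<in> measurable N L"
    and "distr M N X = distr M N Y"
  shows "distr M L (\<lambda>\<omega>. F (X \<omega>)) = distr M L (\<lambda>\<omega>. F (Y \<omega>))"
proof -
  have "distr M L (\<lambda>\<omega>. F (X \<omega>)) = distr (distr M N X) L F"
    by (subst distr_distr) (simp_all add: comp_def)
  also have "\<dots> = distr (distr M N Y) L F"
    using assms(4) by simp
  also have "\<dots> = distr M L (\<lambda>\<omega>. F (Y \<omega>))"
    by (subst distr_distr) (simp_all add: comp_def)
  finally show ?thesis .
qed

lemma window_deviation_diff_subset:
  "window_deviation M (\<lambda>i \<omega>. A i \<omega> - B i \<omega>) Is n \<gamma> \<eta> (a - c) \<subseteq>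
     window_deviation M A Is n \<gamma> (\<eta> / 2) a \<union> window_deviation M B Is n \<gamma> (\<eta> / 2) c"
proof
  fix \<omega> assume "\<omega> \<in> window_deviation M (\<lambda>i \<omega>. A i \<omega> - B i \<omega>) Is n \<gamma> \<eta> (a - c)"
  then obtain m where \<omega>: "\<omega> \<in> space M" "\<gamma> * real n \<le> real m" "m \<le> n"
    and dev: "\<eta> * real m < \<bar>(\<Sum>i\<in>Is m. A i \<omega> - B i \<omega>) - real m * (a - c)\<bar>"
    unfolding window_deviation_def by auto
  have "(\<Sum>i\<in>Is m. A i \<omega> - B i \<omega>) - real m * (a - c)
      = ((\<Sum>i\<in>Is m. A i \<omega>) - real m * a) - ((\<Sum>i\<in>Is m. B i \<omega>) - real m * c)"
    by (simp add: sum_subtractf algebra_simps)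
  with dev have "\<eta> / 2 * real m < \<bar>(\<Sum>i\<in>Is m. A i \<omega>) - real m * a\<bar>
      \<or> \<eta> / 2 * real m < \<bar>(\<Sum>i\<in>Is m. B i \<omega>) - real m * c\<bar>"
    by linarith
  with \<omega> show "\<omega> \<in> window_deviation M A Is n \<gamma> (\<eta> / 2) a \<union> window_deviation M B Is n \<gamma> (\<eta> / 2) c"
    unfolding window_deviation_def by auto
qed

lemma (in prob_space) window_lln_compose_nonneg:
  fixes X :: "'i \<Rightarrow> 'a \<Rightarrow> real" and X0 :: "'a \<Rightarrow> real"
  assumes indep: "indep_vars (\<lambda>_. borel) X J" and X0[measurable]: "X0 \<in> borel_measurable M"
    and dist: "\<And>j. j \<in> J \<Longrightarrow> distr M borel (X j) = distr M borel X0"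
    and "integrable M X0" and F[measurable]: "F \<in> borel_measurable borel"
    and F_bounds: "\<And>x. 0 \<le> F x" "\<And>x. F x \<le> \<bar>x\<bar>" and "0 < \<gamma>" "0 < \<eta>"
  shows "\<exists>g. g \<longlonglongrightarrow> 0 \<and> (\<forall>n Is. nested_family J n Is \<longrightarrow>
      prob (window_deviation M (\<lambda>i \<omega>. F (X i \<omega>)) Is n \<gamma> \<eta> (expectation (\<lambda>\<omega>. F (X0 \<omega>)))) \<le> g n)"
proof (rule window_lln_nonneg)
  have measX: "X j \<in> borel_measurable M" if "j \<in> J" for j
    using indep that unfolding indep_vars_def by auto
  show "indep_vars (\<lambda>_. borel) (\<lambda>i \<omega>. F (X i \<omega>)) J"
    using indep by (rule indep_vars_compose2[where X=X]) measurable
  show "distr M borel (\<lambda>\<omega>. F (X j \<omega>)) = distr M borel (\<lambda>\<omega>. F (X0 \<omega>))" if "j \<in> J" for j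
    by (rule distr_compose_eq[OF measX[OF that] X0 F dist[OF that]])
  show "(\<lambda>\<omega>. F (X0 \<omega>)) \<in> borel_measurable M"
    by measurable
  then show "integrable M (\<lambda>\<omega>. F (X0 \<omega>))"
  proof (rule Bochner_Integration.integrable_bound[OF \<open>integrable M X0\<close>])
    show "AE \<omega> in M. norm (F (X0 \<omega>)) \<le> norm (X0 \<omega>)"
      using F_bounds by (intro AE_I2) simp
  qed
  show "0 \<le> F (X j \<omega>)" "0 \<le> F (X0 \<omega>)" for j \<omega>
    using F_bounds(1) by simp_all
qed fact+

lemma (in prob_space) window_lln:
  fixes X :: "'i \<Rightarrow> 'a \<Rightarrow> real" and X0 :: "'a \<Rightarrow> real"
  assumes indep: "indep_vars (\<lambda>_. borel) X J" and X0[measurable]: "X0 \<in> borel_measurable M"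
    and dist: "\<And>j. j \<in> J \<Longrightarrow> distr M borel (X j) = distr M borel X0"
    and "integrable M X0" and "0 < \<gamma>" "0 < \<eta>"
  shows "\<exists>g. g \<longlonglongrightarrow> 0 \<and>
    (\<forall>n Is. nested_family J n Is \<longrightarrow> prob (window_deviation M X Is n \<gamma> \<eta> (expectation X0)) \<le> g n)"
proof -
  have measX[measurable]: "X j \<in> borel_measurable M" if "j \<in> J" for j
    using indep that unfolding indep_vars_def by auto
  have "0 < \<eta> / 2"
    using \<open>0 < \<eta>\<close> by simp
  define pos where "pos x = max 0 (x::real)" for x
  define neg where "neg x = max 0 (- x::real)" for x
  have measurable_pos[measurable]: "pos \<in> borel_measurable borel"
    unfolding pos_def by measurable
  have measurable_neg[measurable]: "neg \<in> borel_measurable borel"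
    unfolding neg_def by measurable
  have pos_bounds: "0 \<le> pos x" "pos x \<le> \<bar>x\<bar>"
    and neg_bounds: "0 \<le> neg x" "neg x \<le> \<bar>x\<bar>" for x
    unfolding pos_def neg_def by auto
  obtain gP where "gP \<longlonglongrightarrow> 0" and gP: "\<And>n Is. nested_family J n Is \<Longrightarrow>
      prob (window_deviation M (\<lambda>i \<omega>. pos (X i \<omega>)) Is n \<gamma> (\<eta> / 2) (expectation (\<lambda>\<omega>. pos (X0 \<omega>)))) \<le> gP n"
    using window_lln_compose_nonneg[OF indep X0 dist \<open>integrable M X0\<close> measurable_pos pos_bounds
        \<open>0 < \<gamma>\<close> \<open>0 < \<eta> / 2\<close>] by blast
  obtain gN where "gN \<longlonglongrightarrow> 0" and gN: "\<And>n Is. nested_family J n Is \<Longrightarrow>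
      prob (window_deviation M (\<lambda>i \<omega>. neg (X i \<omega>)) Is n \<gamma> (\<eta> / 2) (expectation (\<lambda>\<omega>. neg (X0 \<omega>)))) \<le> gN n"
    using window_lln_compose_nonneg[OF indep X0 dist \<open>integrable M X0\<close> measurable_neg neg_bounds
        \<open>0 < \<gamma>\<close> \<open>0 < \<eta> / 2\<close>] by blast
  have split: "x = pos x - neg x" for x
    unfolding pos_def neg_def by simp
  have X_split: "(\<lambda>i \<omega>. pos (X i \<omega>) - neg (X i \<omega>)) = X"
    using split by (intro ext) (rule sym)
  have "expectation X0 = expectation (\<lambda>\<omega>. pos (X0 \<omega>) - neg (X0 \<omega>))"
    by (intro Bochner_Integration.integral_cong refl split)
  also have "\<dots> = expectation (\<lambda>\<omega>. pos (X0 \<omega>)) - expectation (\<lambda>\<omega>. neg (X0 \<omega>))"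
    using \<open>integrable M X0\<close> pos_bounds neg_bounds
    by (intro Bochner_Integration.integral_diff Bochner_Integration.integrable_bound[OF \<open>integrable M X0\<close>]
        AE_I2) (simp_all, measurable)
  finally have mean: "expectation X0 = expectation (\<lambda>\<omega>. pos (X0 \<omega>)) - expectation (\<lambda>\<omega>. neg (X0 \<omega>))" .
  have "prob (window_deviation M X Is n \<gamma> \<eta> (expectation X0)) \<le> gP n + gN n"
    if Is: "nested_family J n Is" for n Is
  proof -
    have Is_J: "Is m \<subseteq> J" if "m \<le> n" for m
      using Is that unfolding nested_family_def by auto
    have sets: "window_deviation M (\<lambda>i \<omega>. F (X i \<omega>)) Is n \<gamma> (\<eta> / 2) a \<in> sets M"
      if [measurable]: "F \<in> borel_measurable borel" for F :: "real \<Rightarrow> real" and a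
    proof (rule window_deviation_sets[where J=J])
      show "(\<lambda>\<omega>. F (X i \<omega>)) \<in> borel_measurable M" if "i \<in> J" for i
        using measX[OF that] by measurable
    qed (rule Is_J)
    have "window_deviation M X Is n \<gamma> \<eta> (expectation X0)
       = window_deviation M (\<lambda>i \<omega>. pos (X i \<omega>) - neg (X i \<omega>)) Is n \<gamma> \<eta>
           (expectation (\<lambda>\<omega>. pos (X0 \<omega>)) - expectation (\<lambda>\<omega>. neg (X0 \<omega>)))"
      by (simp only: mean X_split)
    also have "\<dots> \<subseteq> window_deviation M (\<lambda>i \<omega>. pos (X i \<omega>)) Is n \<gamma> (\<eta> / 2) (expectation (\<lambda>\<omega>. pos (X0 \<omega>)))
        \<union> window_deviation M (\<lambda>i \<omega>. neg (X i \<omega>)) Is n \<gamma> (\<eta> / 2) (expectation (\<lambda>\<omega>. neg (X0 \<omega>)))"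
      by (rule window_deviation_diff_subset)
    finally have "prob (window_deviation M X Is n \<gamma> \<eta> (expectation X0))
        \<le> prob (window_deviation M (\<lambda>i \<omega>. pos (X i \<omega>)) Is n \<gamma> (\<eta> / 2) (expectation (\<lambda>\<omega>. pos (X0 \<omega>))))
          + prob (window_deviation M (\<lambda>i \<omega>. neg (X i \<omega>)) Is n \<gamma> (\<eta> / 2) (expectation (\<lambda>\<omega>. neg (X0 \<omega>))))"
      using sets[OF measurable_pos] sets[OF measurable_neg]
      by (intro order_trans[OF finite_measure_mono measure_Un_le] sets.Un)
    then show ?thesis
      using gP[OF Is] gN[OF Is] by linarith
  qed
  moreover have "(\<lambda>n. gP n + gN n) \<longlonglongrightarrow> 0"
    using tendsto_add[OF \<open>gP \<longlonglongrightarrow> 0\<close> \<open>gN \<longlonglongrightarrow> 0\<close>] by simp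
  ultimately show ?thesis
    by blast
qed

lemma (in prob_space) window_lln_bounded_linear:
  fixes W :: "'i \<Rightarrow> 'a \<Rightarrow> 'b::euclidean_space" and W0 :: "'a \<Rightarrow> 'b"
  assumes indep: "indep_vars (\<lambda>_. borel) W J" and W0[measurable]: "W0 \<in> borel_measurable M"
    and dist: "\<And>j. j \<in> J \<Longrightarrow> distr M borel (W j) = distr M borel W0"
    and "integrable M W0" and "bounded_linear c" and "0 < \<gamma>" "0 < \<eta>"
  shows "\<exists>g. g \<longlonglongrightarrow> 0 \<and> (\<forall>n Is. nested_family J n Is \<longrightarrow>
     prob (window_deviation M (\<lambda>i \<omega>. c (W i \<omega>)) Is n \<gamma> \<eta> (c (expectation W0))) \<le> g n)"
proof -
  have c[measurable]: "c \<in> borel_measurable borel"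
    using \<open>bounded_linear c\<close> by (intro borel_measurable_continuous_onI linear_continuous_on)
  have measW: "W j \<in> borel_measurable M" if "j \<in> J" for j
    using indep that unfolding indep_vars_def by auto
  have "\<exists>g. g \<longlonglongrightarrow> 0 \<and> (\<forall>n Is. nested_family J n Is \<longrightarrow>
     prob (window_deviation M (\<lambda>i \<omega>. c (W i \<omega>)) Is n \<gamma> \<eta> (expectation (\<lambda>\<omega>. c (W0 \<omega>)))) \<le> g n)"
  proof (rule window_lln)
    show "indep_vars (\<lambda>_. borel) (\<lambda>i \<omega>. c (W i \<omega>)) J"
      using indep by (rule indep_vars_compose2[where X=W]) measurable
    show "distr M borel (\<lambda>\<omega>. c (W j \<omega>)) = distr M borel (\<lambda>\<omega>. c (W0 \<omega>))" if "j \<in> J" for j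
      by (rule distr_compose_eq[OF measW[OF that] W0 c dist[OF that]])
    show "(\<lambda>\<omega>. c (W0 \<omega>)) \<in> borel_measurable M"
      by measurable
    show "integrable M (\<lambda>\<omega>. c (W0 \<omega>))"
      by (rule integrable_bounded_linear[OF \<open>bounded_linear c\<close> \<open>integrable M W0\<close>])
  qed fact+
  then show ?thesis
    by (simp only: integral_bounded_linear[OF \<open>bounded_linear c\<close> \<open>integrable M W0\<close>])
qed

lemma inner_e: "v \<bullet> e \<theta> = fst v * cos \<theta> + snd v * sin \<theta>"
  by (cases v) (simp add: e_def)

lemma ex_minimizer: "\<exists>j\<le>n. \<forall>k\<le>n. f j \<le> (f k :: real)" for n :: nat
proof -
  have "Min (f ` {..n}) \<in> f ` {..n}"
    by (intro Min_in) auto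
  then obtain j where "j \<in> {..n}" "f j = Min (f ` {..n})"
    by (metis imageE)
  then show ?thesis by (auto intro!: exI[of _ j])
qed

lemma Jmin_is_minimizer: "Jmin P n \<theta> \<le> n \<and> (\<forall>k\<le>n. P (Jmin P n \<theta>) \<bullet> e \<theta> \<le> P k \<bullet> e \<theta>)"
  using LeastI_ex[OF ex_minimizer[of n "\<lambda>j. P j \<bullet> e \<theta>"]] unfolding Jmin_def by auto

lemma Jmax_is_maximizer: "Jmax P n \<theta> \<le> n \<and> (\<forall>k\<le>n. P k \<bullet> e \<theta> \<le> P (Jmax P n \<theta>) \<bullet> e \<theta>)"
  using LeastI_ex[OF ex_minimizer[of n "\<lambda>j. - (P j \<bullet> e \<theta>)"]] unfolding Jmax_def by auto

lemma Jmin_le: "j \<le> n \<Longrightarrow> (\<forall>k\<le>n. P j \<bullet> e \<theta> \<le> P k \<bullet> e \<theta>) \<Longrightarrow> Jmin P n \<theta> \<le> j"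
  unfolding Jmin_def by (rule Least_le) blast

lemma Jmax_le: "j \<le> n \<Longrightarrow> (\<forall>k\<le>n. P k \<bullet> e \<theta> \<le> P j \<bullet> e \<theta>) \<Longrightarrow> Jmax P n \<theta> \<le> j"
  unfolding Jmax_def by (rule Least_le) blast

lemma Min_eq_Jmin: "(MIN j\<in>{0..n}. P j \<bullet> e \<theta>) = P (Jmin P n \<theta>) \<bullet> e \<theta>"
  using Jmin_is_minimizer[of P n \<theta>] by (intro Min_eqI) auto

lemma Max_eq_Jmax: "(MAX j\<in>{0..n}. P j \<bullet> e \<theta>) = P (Jmax P n \<theta>) \<bullet> e \<theta>"
  using Jmax_is_maximizer[of P n \<theta>] by (intro Max_eqI) auto

lemma Rng_diff_of_shift:
  assumes before: "\<And>j. j < i \<Longrightarrow> Q j \<bullet> e \<theta> = P j \<bullet> e \<theta>"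
    and after: "\<And>j. i \<le> j \<Longrightarrow> Q j \<bullet> e \<theta> = P j \<bullet> e \<theta> - d"
    and "Jmin P n \<theta> < i" "Jmin Q n \<theta> < i" "i \<le> Jmax P n \<theta>" "i \<le> Jmax Q n \<theta>"
  shows "Rng P n \<theta> - Rng Q n \<theta> = d"
proof -
  have "P (Jmin P n \<theta>) \<bullet> e \<theta> = Q (Jmin Q n \<theta>) \<bullet> e \<theta>"
    using Jmin_is_minimizer[of P n \<theta>] Jmin_is_minimizer[of Q n \<theta>] before[OF assms(3)] before[OF assms(4)]
    by (metis order.antisym)
  moreover have "P (Jmax P n \<theta>) \<bullet> e \<theta> = P (Jmax Q n \<theta>) \<bullet> e \<theta>"
  proof -
    have "P (Jmax Q n \<theta>) \<bullet> e \<theta> \<le> P (Jmax P n \<theta>) \<bullet> e \<theta>"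
      using Jmax_is_maximizer[of P n \<theta>] Jmax_is_maximizer[of Q n \<theta>] by blast
    moreover have "Q (Jmax P n \<theta>) \<bullet> e \<theta> \<le> Q (Jmax Q n \<theta>) \<bullet> e \<theta>"
      using Jmax_is_maximizer[of P n \<theta>] Jmax_is_maximizer[of Q n \<theta>] by blast
    ultimately show ?thesis
      using after[OF assms(5)] after[OF assms(6)] by linarith
  qed
  ultimately show ?thesis
    unfolding Rng_def Min_eq_Jmin Max_eq_Jmax using after assms(6) by simp
qed

lemma Delta_eq_on_Ev:
  assumes "i \<in> Iset n \<gamma>" "\<omega> \<in> Ev M Z Z' n i \<delta> \<gamma>" "\<theta> \<in> {\<delta>..pi - \<delta>}"
  shows "Delta Z Z' n i \<theta> \<omega> = (Z i \<omega> - Z' i \<omega>) \<bullet> e \<theta>"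
  unfolding Delta_def
proof (rule Rng_diff_of_shift)
  show "walk_res Z Z' i j \<omega> \<bullet> e \<theta> = walk Z j \<omega> \<bullet> e \<theta>" if "j < i" for j
    using that unfolding walk_res_def by simp
  show "walk_res Z Z' i j \<omega> \<bullet> e \<theta> = walk Z j \<omega> \<bullet> e \<theta> - (Z i \<omega> - Z' i \<omega>) \<bullet> e \<theta>" if "i \<le> j" for j
    using that unfolding walk_res_def by (simp add: inner_diff_left inner_add_left)
  have "\<gamma> * real n \<le> real i" "real i \<le> (1 - \<gamma>) * real n"
    using assms(1) unfolding Iset_def by auto
  with assms(2,3) show "Jmin (\<lambda>j. walk Z j \<omega>) n \<theta> < i" "Jmin (\<lambda>j. walk_res Z Z' i j \<omega>) n \<theta> < i"
    "i \<le> Jmax (\<lambda>j. walk Z j \<omega>) n \<theta>" "i \<le> Jmax (\<lambda>j. walk_res Z Z' i j \<omega>) n \<theta>"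
    unfolding Ev_def by (fastforce simp del: of_nat_less_iff)+
qed

lemma closure_Icc_Int_Rats:
  fixes a b :: real assumes "a < b"
  shows "closure ({a..b} \<inter> \<rat>) = {a..b}"
  using assms closure_convex_Int_superset[of "{a..b}" \<rat>] by (simp add: Rats_closure_real)

text \<open>A condition that is closed in \<theta> holds on all of [a, b] iff it holds at the countably many
  rational points, which makes the event measurable.\<close>
lemma sets_Collect_forall_Icc_closed:
  fixes Q :: "'a \<Rightarrow> real \<Rightarrow> bool"
  assumes "a < b"
    and sets: "\<And>\<theta>. {\<omega>\<in>space M. Q \<omega> \<theta>} \<in> sets M"
    and closed: "\<And>\<omega>. \<omega> \<in> space M \<Longrightarrow> closed {\<theta>. Q \<omega> \<theta>}"
  shows "{\<omega>\<in>space M. \<forall>\<theta>\<in>{a..b}. Q \<omega> \<theta>} \<in> sets M"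
proof -
  have "{\<omega>\<in>space M. \<forall>\<theta>\<in>{a..b}. Q \<omega> \<theta>} = {\<omega>\<in>space M. \<forall>\<theta>\<in>{a..b} \<inter> \<rat>. Q \<omega> \<theta>}"
  proof (intro Collect_cong conj_cong refl iffI)
    fix \<omega> assume "\<omega> \<in> space M" and "\<forall>\<theta>\<in>{a..b} \<inter> \<rat>. Q \<omega> \<theta>"
    then have "closure ({a..b} \<inter> \<rat>) \<subseteq> {\<theta>. Q \<omega> \<theta>}"
      using closed by (intro closure_minimal) auto
    then show "\<forall>\<theta>\<in>{a..b}. Q \<omega> \<theta>"
      using closure_Icc_Int_Rats[OF \<open>a < b\<close>] by auto
  qed auto
  also have "\<dots> \<in> sets M"
    using countable_rat by (intro sets.sets_Collect_countable_All' sets countable_Int2)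
  finally show ?thesis .
qed

lemma continuous_on_Max_image:
  fixes f :: "'k \<Rightarrow> real \<Rightarrow> real"
  assumes "finite B" "B \<noteq> {}" "\<And>k. k \<in> B \<Longrightarrow> continuous_on S (f k)"
  shows "continuous_on S (\<lambda>x. Max ((\<lambda>k. f k x) ` B))"
  using assms
proof (induction B rule: finite_ne_induct)
  case (singleton k)
  then show ?case by simp
next
  case (insert k F)
  have eq: "(\<lambda>x. Max ((\<lambda>k. f k x) ` insert k F)) = (\<lambda>x. max (f k x) (Max ((\<lambda>k. f k x) ` F)))"
    using insert.hyps by (auto intro!: ext Max_insert)
  have "continuous_on S (\<lambda>x. max (f k x) (Max ((\<lambda>k. f k x) ` F)))"
    using insert by (intro continuous_on_max) auto
  then show ?case unfolding eq .
qed

text \<open>By compactness, a finite family of continuous functions whose maximum is positive on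
  [a, b] has maximum at least some rational r > 0 there; this reduces the event to a countable
  union of events of the closed kind.\<close>
lemma sets_Collect_forall_Icc_ex_pos:
  fixes h :: "'a \<Rightarrow> 'k \<Rightarrow> real \<Rightarrow> real"
  assumes ab: "a < b" and fB: "finite B" and nB: "B \<noteq> {}"
    and mh: "\<And>k \<theta>. k \<in> B \<Longrightarrow> (\<lambda>\<omega>. h \<omega> k \<theta>) \<in> borel_measurable M"
    and ch: "\<And>\<omega> k. k \<in> B \<Longrightarrow> continuous_on UNIV (h \<omega> k)"
  shows "{\<omega>\<in>space M. \<forall>\<theta>\<in>{a..b}. \<exists>k\<in>B. h \<omega> k \<theta> > 0} \<in> sets M"
proof -
  have eq: "{\<omega>\<in>space M. \<forall>\<theta>\<in>{a..b}. \<exists>k\<in>B. h \<omega> k \<theta> > 0} =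
     {\<omega>\<in>space M. \<exists>r\<in>\<rat> \<inter> {0<..}. \<forall>\<theta>\<in>{a..b}. \<exists>k\<in>B. h \<omega> k \<theta> \<ge> r}"
  proof (intro Collect_cong conj_cong refl iffI)
    fix \<omega> assume w: "\<omega> \<in> space M" and pos: "\<forall>\<theta>\<in>{a..b}. \<exists>k\<in>B. h \<omega> k \<theta> > 0"
    define H where "H \<theta> = Max ((\<lambda>k. h \<omega> k \<theta>) ` B)" for \<theta>
    have cH: "continuous_on {a..b} H" unfolding H_def
      using fB nB ch by (intro continuous_on_Max_image) (auto intro: continuous_on_subset)
    obtain x where x: "x \<in> {a..b}" "\<forall>y\<in>{a..b}. H x \<le> H y"
      using continuous_attains_inf[OF compact_Icc _ cH] ab by auto
    obtain k where k: "k \<in> B" "h \<omega> k x > 0" using pos x(1) by blast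
    have "h \<omega> k x \<le> H x" unfolding H_def using fB k(1) by (intro Max_ge) auto
    then have Hx: "H x > 0" using k by linarith
    obtain r where r: "r \<in> \<rat>" "0 < r" "r < H x" using Rats_dense_in_real[OF Hx] by blast
    have "\<forall>\<theta>\<in>{a..b}. \<exists>k\<in>B. h \<omega> k \<theta> \<ge> r"
    proof
      fix \<theta> assume th: "\<theta> \<in> {a..b}"
      have "H \<theta> \<in> (\<lambda>k. h \<omega> k \<theta>) ` B" unfolding H_def using fB nB by (intro Max_in) auto
      then obtain k where "k \<in> B" "H \<theta> = h \<omega> k \<theta>" by auto
      moreover have "H x \<le> H \<theta>" using x th by blast
      ultimately show "\<exists>k\<in>B. h \<omega> k \<theta> \<ge> r" using r by force
    qed
    then show "\<exists>r\<in>\<rat> \<inter> {0<..}. \<forall>\<theta>\<in>{a..b}. \<exists>k\<in>B. h \<omega> k \<theta> \<ge> r" using r by blast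
  next
    fix \<omega> assume "\<exists>r\<in>\<rat> \<inter> {0<..}. \<forall>\<theta>\<in>{a..b}. \<exists>k\<in>B. h \<omega> k \<theta> \<ge> r"
    then show "\<forall>\<theta>\<in>{a..b}. \<exists>k\<in>B. h \<omega> k \<theta> > 0" by force
  qed
  have cnt: "countable (\<rat> \<inter> {0<..})" using countable_rat by (rule countable_Int1)
  show ?thesis unfolding eq
  proof (rule sets.sets_Collect_countable_Ex'[OF sets_Collect_forall_Icc_closed[OF ab] cnt])
    fix r :: real and \<theta>
    show "{\<omega> \<in> space M. \<exists>k\<in>B. r \<le> h \<omega> k \<theta>} \<in> sets M"
    proof (rule sets.sets_Collect_countable_Ex')
      fix k assume "k \<in> B"
      from mh[OF this, of \<theta>] show "{\<omega> \<in> space M. r \<le> h \<omega> k \<theta>} \<in> sets M" by measurable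
    next
      show "countable B" using fB by (rule countable_finite)
    qed
  next
    fix r :: real and \<omega>
    have "{\<theta>. \<exists>k\<in>B. r \<le> h \<omega> k \<theta>} = (\<Union>k\<in>B. {\<theta>. r \<le> h \<omega> k \<theta>})" by auto
    also have "closed \<dots>" using fB ch by (intro closed_UN ballI closed_Collect_le) auto
    finally show "closed {\<theta>. \<exists>k\<in>B. r \<le> h \<omega> k \<theta>}" .
  qed
qed

lemma continuous_on_inner_e: "continuous_on UNIV (\<lambda>\<theta>. v \<bullet> e \<theta>)"
  unfolding inner_e by (intro continuous_intros)

lemma Jmin_less_iff: "real (Jmin P n \<theta>) < c \<longleftrightarrow> (\<exists>j\<le>n. real j < c \<and> (\<forall>k\<le>n. P j \<bullet> e \<theta> \<le> P k \<bullet> e \<theta>))"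
proof
  assume "real (Jmin P n \<theta>) < c" then show "\<exists>j\<le>n. real j < c \<and> (\<forall>k\<le>n. P j \<bullet> e \<theta> \<le> P k \<bullet> e \<theta>)"
    using Jmin_is_minimizer[of P n \<theta>] by blast
next
  assume "\<exists>j\<le>n. real j < c \<and> (\<forall>k\<le>n. P j \<bullet> e \<theta> \<le> P k \<bullet> e \<theta>)"
  then obtain j where "j \<le> n" "real j < c" "\<forall>k\<le>n. P j \<bullet> e \<theta> \<le> P k \<bullet> e \<theta>" by blast
  then have "Jmin P n \<theta> \<le> j" by (intro Jmin_le)
  then show "real (Jmin P n \<theta>) < c" using \<open>real j < c\<close> by linarith
qed

lemma Jmax_greater_iff: "c < real (Jmax P n \<theta>) \<longleftrightarrow> (\<forall>j\<le>n. real j \<le> c \<longrightarrow> (\<exists>k\<le>n. P j \<bullet> e \<theta> < P k \<bullet> e \<theta>))"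
proof
  assume a: "c < real (Jmax P n \<theta>)"
  show "\<forall>j\<le>n. real j \<le> c \<longrightarrow> (\<exists>k\<le>n. P j \<bullet> e \<theta> < P k \<bullet> e \<theta>)"
  proof (intro allI impI)
    fix j assume j: "j \<le> n" "real j \<le> c"
    show "\<exists>k\<le>n. P j \<bullet> e \<theta> < P k \<bullet> e \<theta>"
    proof (rule ccontr)
      assume "\<not> ?thesis"
      then have "\<forall>k\<le>n. P k \<bullet> e \<theta> \<le> P j \<bullet> e \<theta>" by (auto simp: not_less)
      then have "Jmax P n \<theta> \<le> j" using j by (intro Jmax_le)
      then show False using a j by linarith
    qed
  qed
next
  assume a: "\<forall>j\<le>n. real j \<le> c \<longrightarrow> (\<exists>k\<le>n. P j \<bullet> e \<theta> < P k \<bullet> e \<theta>)"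
  show "c < real (Jmax P n \<theta>)"
  proof (rule ccontr)
    assume "\<not> ?thesis"
    then have "real (Jmax P n \<theta>) \<le> c" by simp
    then obtain k where "k \<le> n" "P (Jmax P n \<theta>) \<bullet> e \<theta> < P k \<bullet> e \<theta>"
      using a Jmax_is_maximizer[of P n \<theta>] by blast
    then show False using Jmax_is_maximizer[of P n \<theta>] by fastforce
  qed
qed

lemma sets_forall_Jmin_less:
  fixes P :: "'a \<Rightarrow> nat \<Rightarrow> real \<times> real"
  assumes mP: "\<And>j. (\<lambda>\<omega>. P \<omega> j) \<in> borel_measurable M" and ab: "a < b"
  shows "{\<omega>\<in>space M. \<forall>\<theta>\<in>{a..b}. real (Jmin (P \<omega>) n \<theta>) < c} \<in> sets M"
proof -
  have eq: "{\<omega>\<in>space M. \<forall>\<theta>\<in>{a..b}. real (Jmin (P \<omega>) n \<theta>) < c} =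
    {\<omega>\<in>space M. \<forall>\<theta>\<in>{a..b}. \<exists>j\<in>{..n}. real j < c \<and> (\<forall>k\<in>{..n}. P \<omega> j \<bullet> e \<theta> \<le> P \<omega> k \<bullet> e \<theta>)}"
    by (simp only: Jmin_less_iff Bex_def Ball_def atMost_iff)
  show ?thesis unfolding eq
  proof (rule sets_Collect_forall_Icc_closed[OF ab])
    fix \<theta>
    show "{\<omega> \<in> space M. \<exists>j\<in>{..n}. real j < c \<and> (\<forall>k\<in>{..n}. P \<omega> j \<bullet> e \<theta> \<le> P \<omega> k \<bullet> e \<theta>)} \<in> sets M"
    proof (rule sets.sets_Collect_countable_Ex')
      fix j
      show "{\<omega> \<in> space M. real j < c \<and> (\<forall>k\<in>{..n}. P \<omega> j \<bullet> e \<theta> \<le> P \<omega> k \<bullet> e \<theta>)} \<in> sets M"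
      proof (rule sets.sets_Collect_conj)
        show "{\<omega> \<in> space M. real j < c} \<in> sets M" by (rule sets.sets_Collect_const)
        show "{\<omega> \<in> space M. \<forall>k\<in>{..n}. P \<omega> j \<bullet> e \<theta> \<le> P \<omega> k \<bullet> e \<theta>} \<in> sets M"
        proof (rule sets.sets_Collect_countable_All')
          fix k
          have [measurable]: "(\<lambda>\<omega>. P \<omega> j) \<in> borel_measurable M" "(\<lambda>\<omega>. P \<omega> k) \<in> borel_measurable M"
            by (rule mP)+
          show "{\<omega> \<in> space M. P \<omega> j \<bullet> e \<theta> \<le> P \<omega> k \<bullet> e \<theta>} \<in> sets M" by measurable
        qed simp
      qed
    qed simp
  next
    fix \<omega>
    have "{\<theta>. \<exists>j\<in>{..n}. real j < c \<and> (\<forall>k\<in>{..n}. P \<omega> j \<bullet> e \<theta> \<le> P \<omega> k \<bullet> e \<theta>)} =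
      (\<Union>j\<in>{j\<in>{..n}. real j < c}. \<Inter>k\<in>{..n}. {\<theta>. P \<omega> j \<bullet> e \<theta> \<le> P \<omega> k \<bullet> e \<theta>})" by auto
    also have "closed \<dots>"
      by (intro closed_UN closed_INT ballI closed_Collect_le continuous_on_inner_e) auto
    finally show "closed {\<theta>. \<exists>j\<in>{..n}. real j < c \<and> (\<forall>k\<in>{..n}. P \<omega> j \<bullet> e \<theta> \<le> P \<omega> k \<bullet> e \<theta>)}" .
  qed
qed

lemma sets_forall_Jmax_greater:
  fixes P :: "'a \<Rightarrow> nat \<Rightarrow> real \<times> real"
  assumes mP: "\<And>j. (\<lambda>\<omega>. P \<omega> j) \<in> borel_measurable M" and ab: "a < b"
  shows "{\<omega>\<in>space M. \<forall>\<theta>\<in>{a..b}. c < real (Jmax (P \<omega>) n \<theta>)} \<in> sets M"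
proof -
  have eq: "{\<omega>\<in>space M. \<forall>\<theta>\<in>{a..b}. c < real (Jmax (P \<omega>) n \<theta>)} =
    {\<omega>\<in>space M. \<forall>j\<in>{j\<in>{..n}. real j \<le> c}. \<forall>\<theta>\<in>{a..b}. \<exists>k\<in>{..n}. P \<omega> k \<bullet> e \<theta> - P \<omega> j \<bullet> e \<theta> > 0}"
    by (simp only: Jmax_greater_iff Bex_def Ball_def atMost_iff mem_Collect_eq diff_gt_0_iff_gt) blast
  show ?thesis unfolding eq
  proof (rule sets.sets_Collect_countable_All')
    fix j
    show "{\<omega> \<in> space M. \<forall>\<theta>\<in>{a..b}. \<exists>k\<in>{..n}. P \<omega> k \<bullet> e \<theta> - P \<omega> j \<bullet> e \<theta> > 0} \<in> sets M"
    proof (rule sets_Collect_forall_Icc_ex_pos[OF ab])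
      fix k \<theta>
      have [measurable]: "(\<lambda>\<omega>. P \<omega> j) \<in> borel_measurable M" "(\<lambda>\<omega>. P \<omega> k) \<in> borel_measurable M"
        by (rule mP)+
      show "(\<lambda>\<omega>. P \<omega> k \<bullet> e \<theta> - P \<omega> j \<bullet> e \<theta>) \<in> borel_measurable M" by measurable
    next
      fix \<omega> k
      show "continuous_on UNIV (\<lambda>\<theta>. P \<omega> k \<bullet> e \<theta> - P \<omega> j \<bullet> e \<theta>)"
        by (intro continuous_on_diff continuous_on_inner_e)
    qed auto
  qed simp
qed

lemma walk_measurable:
  assumes "\<And>i. i \<ge> 1 \<Longrightarrow> Z i \<in> borel_measurable M"
  shows "(\<lambda>\<omega>. walk Z j \<omega>) \<in> borel_measurable M"
  unfolding walk_def using assms by (intro borel_measurable_sum) auto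

lemma walk_res_measurable:
  assumes "\<And>i. i \<ge> 1 \<Longrightarrow> Z i \<in> borel_measurable M" "\<And>i. i \<ge> 1 \<Longrightarrow> Z' i \<in> borel_measurable M"
    and "i \<ge> 1"
  shows "(\<lambda>\<omega>. walk_res Z Z' i j \<omega>) \<in> borel_measurable M"
proof -
  have [measurable]: "(\<lambda>\<omega>. walk Z j \<omega>) \<in> borel_measurable M" by (rule walk_measurable[OF assms(1)])
  have [measurable]: "Z i \<in> borel_measurable M" "Z' i \<in> borel_measurable M" using assms by auto
  show ?thesis unfolding walk_res_def by measurable
qed

lemma Ev_sets:
  assumes meas: "\<And>i. i \<ge> 1 \<Longrightarrow> Z i \<in> borel_measurable M"
    and meas': "\<And>i. i \<ge> 1 \<Longrightarrow> Z' i \<in> borel_measurable M"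
    and i: "i \<ge> 1" and \<delta>: "0 < \<delta>" "\<delta> < pi/2"
  shows "Ev M Z Z' n i \<delta> \<gamma> \<in> sets M"
proof -
  have ab: "\<delta> < pi - \<delta>" using \<delta> by simp
  have m1: "\<And>j. (\<lambda>\<omega>. walk Z j \<omega>) \<in> borel_measurable M" by (rule walk_measurable[OF meas])
  have m2: "\<And>j. (\<lambda>\<omega>. walk_res Z Z' i j \<omega>) \<in> borel_measurable M" by (rule walk_res_measurable[OF meas meas' i])
  have "Ev M Z Z' n i \<delta> \<gamma> =
    {\<omega>\<in>space M. (\<forall>\<theta>\<in>{\<delta>..pi - \<delta>}. real (Jmin (\<lambda>j. walk Z j \<omega>) n \<theta>) < \<gamma> * real n) \<and>
      (\<forall>\<theta>\<in>{\<delta>..pi - \<delta>}. (1 - \<gamma>) * real n < real (Jmax (\<lambda>j. walk Z j \<omega>) n \<theta>)) \<and>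
      (\<forall>\<theta>\<in>{\<delta>..pi - \<delta>}. real (Jmin (\<lambda>j. walk_res Z Z' i j \<omega>) n \<theta>) < \<gamma> * real n) \<and>
      (\<forall>\<theta>\<in>{\<delta>..pi - \<delta>}. (1 - \<gamma>) * real n < real (Jmax (\<lambda>j. walk_res Z Z' i j \<omega>) n \<theta>))}"
    unfolding Ev_def by auto
  also have "\<dots> \<in> sets M"
    by (intro sets.sets_Collect_conj sets_forall_Jmin_less[OF _ ab] sets_forall_Jmax_greater[OF _ ab] m1 m2)
  finally show ?thesis .
qed

lemma sin_le_sin_on_Icc:
  assumes "0 < \<delta>" "\<delta> < pi / 2" "\<theta> \<in> {\<delta>..pi - \<delta>}"
  shows "sin \<delta> \<le> sin \<theta>"
proof (cases "\<theta> \<le> pi / 2")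
  case True
  then show ?thesis using assms by (intro sin_monotone_2pi_le) auto
next
  case False
  have "sin \<delta> \<le> sin (pi - \<theta>)" using assms False by (intro sin_monotone_2pi_le) auto
  then show ?thesis by simp
qed

lemma inner_e_pos:
  assumes "0 < \<delta>" "\<delta> < pi / 2" "\<theta> \<in> {\<delta>..pi - \<delta>}" and small: "\<bar>fst v\<bar> < snd v * sin \<delta>"
  shows "0 < v \<bullet> e \<theta>"
proof -
  have "0 < sin \<delta>"
    using assms(1,2) by (intro sin_gt_zero) auto
  moreover have "0 < snd v * sin \<delta>"
    using small by linarith
  ultimately have "0 \<le> snd v"
    by (simp add: zero_less_mult_iff)
  then have "snd v * sin \<delta> \<le> snd v * sin \<theta>"
    using sin_le_sin_on_Icc[OF assms(1-3)] by (intro mult_left_mono)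
  moreover have "\<bar>fst v * cos \<theta>\<bar> \<le> \<bar>fst v\<bar>"
    using abs_cos_le_one[of \<theta>] by (simp add: abs_mult mult_left_le)
  ultimately show ?thesis
    unfolding inner_e using small by linarith
qed

lemma inner_e_pos_of_drift:
  assumes "0 < \<delta>" "\<delta> < pi / 2" "\<theta> \<in> {\<delta>..pi - \<delta>}" "0 < \<mu>" "0 < m"
    and x: "\<bar>fst v\<bar> \<le> \<mu> * sin \<delta> / 4 * m" and y: "\<bar>snd v - m * \<mu>\<bar> \<le> \<mu> / 2 * m"
  shows "0 < v \<bullet> e \<theta>"
proof (rule inner_e_pos[OF assms(1-3)])
  have "0 < sin \<delta>"
    using assms(1,2) by (intro sin_gt_zero) auto
  have "\<bar>fst v\<bar> \<le> \<mu> * m / 2 * sin \<delta> / 2"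
    using x by (simp add: field_simps)
  also have "\<dots> < \<mu> * m / 2 * sin \<delta>"
    using \<open>0 < sin \<delta>\<close> \<open>0 < \<mu>\<close> \<open>0 < m\<close> by simp
  also have "\<dots> \<le> snd v * sin \<delta>"
  proof (rule mult_right_mono)
    have "\<mu> / 2 * m = \<mu> * m / 2" "m * \<mu> = \<mu> * m"
      by simp_all
    then show "\<mu> * m / 2 \<le> snd v"
      using abs_le_D2[OF y] by linarith
  qed (use \<open>0 < sin \<delta>\<close> in simp)
  finally show "\<bar>fst v\<bar> < snd v * sin \<delta>" .
qed

lemma Jmin_less_of_pos:
  fixes P :: "nat \<Rightarrow> real \<times> real"
  assumes P0: "P 0 = 0" and pos: "\<And>m. \<gamma> * real n \<le> real m \<Longrightarrow> m \<le> n \<Longrightarrow> P m \<bullet> e \<theta> > 0"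
  shows "real (Jmin P n \<theta>) < \<gamma> * real n"
proof (rule ccontr)
  assume "\<not> ?thesis"
  then have "\<gamma> * real n \<le> real (Jmin P n \<theta>)" by simp
  moreover have "Jmin P n \<theta> \<le> n" "P (Jmin P n \<theta>) \<bullet> e \<theta> \<le> P 0 \<bullet> e \<theta>" using Jmin_is_minimizer[of P n \<theta>] by auto
  ultimately show False using pos[of "Jmin P n \<theta>"] P0 by simp
qed

lemma Jmax_greater_of_pos:
  fixes P :: "nat \<Rightarrow> real \<times> real"
  assumes pos: "\<And>m. \<gamma> * real n \<le> real m \<Longrightarrow> m \<le> n \<Longrightarrow> (P n - P (n - m)) \<bullet> e \<theta> > 0"
  shows "(1 - \<gamma>) * real n < real (Jmax P n \<theta>)"
proof (rule ccontr)
  assume "\<not> ?thesis"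
  then have b: "real (Jmax P n \<theta>) \<le> (1 - \<gamma>) * real n" by simp
  have bn: "Jmax P n \<theta> \<le> n" and mx: "P n \<bullet> e \<theta> \<le> P (Jmax P n \<theta>) \<bullet> e \<theta>" using Jmax_is_maximizer[of P n \<theta>] by auto
  define m where "m = n - Jmax P n \<theta>"
  have "real m = real n - real (Jmax P n \<theta>)" unfolding m_def using bn by simp
  then have "\<gamma> * real n \<le> real m" using b by (simp add: algebra_simps)
  moreover have "m \<le> n" unfolding m_def by simp
  moreover have "n - m = Jmax P n \<theta>" unfolding m_def using bn by simp
  ultimately have "(P n - P (Jmax P n \<theta>)) \<bullet> e \<theta> > 0" using pos by metis
  then show False using mx by (simp add: inner_diff_left)
qed

text \<open>The sets res_prefix_idx i m and
  res_suffix_idx n i m collect the increments of the resampled walk that make up its position at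
  time m and its last m steps before time n.\<close>
definition increment :: "(nat \<Rightarrow> 'a \<Rightarrow> real \<times> real) \<Rightarrow> (nat \<Rightarrow> 'a \<Rightarrow> real \<times> real) \<Rightarrow> nat + nat \<Rightarrow> 'a \<Rightarrow> real \<times> real" where
  "increment Z Z' u = (case u of Inl k \<Rightarrow> Z k | Inr k \<Rightarrow> Z' k)"

definition increment_idx :: "(nat + nat) set" where
  "increment_idx = Inl ` {1..} \<union> Inr ` {1..}"

definition prefix_idx :: "nat \<Rightarrow> (nat + nat) set" where
  "prefix_idx m = Inl ` {1..m}"

definition suffix_idx :: "nat \<Rightarrow> nat \<Rightarrow> (nat + nat) set" where
  "suffix_idx n m = Inl ` {n - m + 1..n}"

definition res_prefix_idx :: "nat \<Rightarrow> nat \<Rightarrow> (nat + nat) set" where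
  "res_prefix_idx i m = (if m < i then Inl ` {1..m} else Inl ` ({1..m} - {i}) \<union> {Inr i})"

definition res_suffix_idx :: "nat \<Rightarrow> nat \<Rightarrow> nat \<Rightarrow> (nat + nat) set" where
  "res_suffix_idx n i m = (if n - m < i then Inl ` ({n - m + 1..n} - {i}) \<union> {Inr i} else Inl ` {n - m + 1..n})"

definition windows_in_cone :: "(nat \<Rightarrow> 'a \<Rightarrow> real \<times> real) \<Rightarrow> (nat \<Rightarrow> 'a \<Rightarrow> real \<times> real)
    \<Rightarrow> (nat \<Rightarrow> (nat + nat) set) \<Rightarrow> nat \<Rightarrow> real \<Rightarrow> real \<Rightarrow> 'a set" where
  "windows_in_cone Z Z' Is n \<gamma> \<delta> = {\<omega>. \<forall>m \<theta>. \<gamma> * real n \<le> real m \<longrightarrow> m \<le> n \<longrightarrow> 0 < m \<longrightarrow>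
     \<theta> \<in> {\<delta>..pi - \<delta>} \<longrightarrow> 0 < (\<Sum>u\<in>Is m. increment Z Z' u \<omega>) \<bullet> e \<theta>}"

lemma sum_Inl: "(\<Sum>u\<in>Inl ` A. increment Z Z' u \<omega>) = (\<Sum>k\<in>A. Z k \<omega>)"
  by (subst sum.reindex) (auto simp: increment_def inj_on_def)

lemma card_Inl: "card (Inl ` A :: ('b + 'c) set) = card A"
  by (rule card_image) (auto simp: inj_on_def)

lemma nested_prefix_idx: "nested_family increment_idx n prefix_idx"
  unfolding nested_family_def prefix_idx_def increment_idx_def by (auto simp: card_Inl)

lemma nested_suffix_idx: "nested_family increment_idx n (suffix_idx n)"
  unfolding nested_family_def suffix_idx_def increment_idx_def by (auto simp: card_Inl)

lemma nested_res_prefix_idx: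
  assumes "1 \<le> i"
  shows "nested_family increment_idx n (res_prefix_idx i)"
  unfolding nested_family_def
proof (intro conjI allI impI)
  fix m assume "m \<le> n"
  show "res_prefix_idx i m \<subseteq> increment_idx" using assms unfolding res_prefix_idx_def increment_idx_def by auto
  show "finite (res_prefix_idx i m)" unfolding res_prefix_idx_def by auto
  show "card (res_prefix_idx i m) = m"
  proof (cases "m < i")
    case True then show ?thesis unfolding res_prefix_idx_def by (simp add: card_Inl)
  next
    case False
    then have "i \<in> {1..m}" using assms by auto
    then have "card (Inl ` ({1..m} - {i}) :: (nat + nat) set) = m - 1" by (simp add: card_Inl)
    moreover have "Inr i \<notin> (Inl ` ({1..m} - {i}) :: (nat + nat) set)" by auto
    ultimately show ?thesis unfolding res_prefix_idx_def using False assms by simp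
  qed
next
  fix a c :: nat assume "a \<le> c" "c \<le> n"
  then show "res_prefix_idx i a \<subseteq> res_prefix_idx i c" unfolding res_prefix_idx_def by auto
qed

lemma nested_res_suffix_idx:
  assumes "1 \<le> i" "i \<le> n"
  shows "nested_family increment_idx n (res_suffix_idx n i)"
  unfolding nested_family_def
proof (intro conjI allI impI)
  fix m assume m: "m \<le> n"
  show "res_suffix_idx n i m \<subseteq> increment_idx" using assms unfolding res_suffix_idx_def increment_idx_def by auto
  show "finite (res_suffix_idx n i m)" unfolding res_suffix_idx_def by auto
  show "card (res_suffix_idx n i m) = m"
  proof (cases "n - m < i")
    case False then show ?thesis unfolding res_suffix_idx_def using m by (simp add: card_Inl)
  next
    case True
    then have "i \<in> {n - m + 1..n}" using assms by auto
    then have "card (Inl ` ({n - m + 1..n} - {i}) :: (nat + nat) set) = m - 1" using m by (simp add: card_Inl)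
    moreover have "Inr i \<notin> (Inl ` ({n - m + 1..n} - {i}) :: (nat + nat) set)" by auto
    moreover have "m \<ge> 1" using True assms by auto
    ultimately show ?thesis unfolding res_suffix_idx_def using True by simp
  qed
next
  fix a c :: nat assume ac: "a \<le> c" "c \<le> n"
  have sub: "{n - a + 1..n} \<subseteq> {n - c + 1..n}" using ac by auto
  show "res_suffix_idx n i a \<subseteq> res_suffix_idx n i c"
  proof (cases "n - a < i")
    case True
    then have "n - c < i" using ac by linarith
    have "Inl ` ({n - a + 1..n} - {i}) \<subseteq> (Inl ` ({n - c + 1..n} - {i}) :: (nat + nat) set)"
      using sub by (intro image_mono Diff_mono) auto
    then show ?thesis unfolding res_suffix_idx_def using True \<open>n - c < i\<close> by auto
  next
    case False
    show ?thesis
    proof (cases "n - c < i")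
      case True
      have "Inl ` {n - a + 1..n} \<subseteq> (Inl ` ({n - c + 1..n} - {i}) :: (nat + nat) set)"
        using sub False by (intro image_mono) auto
      then show ?thesis unfolding res_suffix_idx_def using True False by auto
    next
      case False2: False
      have "Inl ` {n - a + 1..n} \<subseteq> (Inl ` {n - c + 1..n} :: (nat + nat) set)"
        using sub by (intro image_mono)
      then show ?thesis unfolding res_suffix_idx_def using False2 False by auto
    qed
  qed
qed

lemma walk_split: "m \<le> n \<Longrightarrow> walk Z n \<omega> = walk Z (n - m) \<omega> + (\<Sum>k\<in>{n - m + 1..n}. Z k \<omega>)"
proof -
  assume m: "m \<le> n"
  have "{1..n} = {1..n - m} \<union> {n - m + 1..n}" using m by auto
  moreover have "{1..n - m} \<inter> {n - m + 1..n} = {}" by auto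
  ultimately show ?thesis unfolding walk_def by (simp add: sum.union_disjoint)
qed

lemma sum_prefix_idx: "(\<Sum>u\<in>prefix_idx m. increment Z Z' u \<omega>) = walk Z m \<omega>"
  unfolding prefix_idx_def sum_Inl walk_def ..

lemma sum_suffix_idx: "m \<le> n \<Longrightarrow> (\<Sum>u\<in>suffix_idx n m. increment Z Z' u \<omega>) = walk Z n \<omega> - walk Z (n - m) \<omega>"
  unfolding suffix_idx_def sum_Inl using walk_split[of m n Z \<omega>] by simp

lemma sum_increment_replace: "finite A \<Longrightarrow> i \<in> A \<Longrightarrow>
   (\<Sum>u\<in>Inl ` (A - {i}) \<union> {Inr i}. increment Z Z' u \<omega>) = (\<Sum>k\<in>A. Z k \<omega>) - Z i \<omega> + Z' i \<omega>"
proof -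
  assume A: "finite A" "i \<in> A"
  have "(\<Sum>u\<in>Inl ` (A - {i}) \<union> {Inr i}. increment Z Z' u \<omega>) = (\<Sum>u\<in>Inl ` (A - {i}). increment Z Z' u \<omega>) + increment Z Z' (Inr i) \<omega>"
    using A by (subst sum.union_disjoint) auto
  also have "\<dots> = (\<Sum>k\<in>A - {i}. Z k \<omega>) + Z' i \<omega>" unfolding sum_Inl by (simp add: increment_def)
  also have "(\<Sum>k\<in>A - {i}. Z k \<omega>) = (\<Sum>k\<in>A. Z k \<omega>) - Z i \<omega>" using A by (simp add: sum_diff1)
  finally show ?thesis .
qed

lemma sum_res_prefix_idx: "i \<ge> 1 \<Longrightarrow> (\<Sum>u\<in>res_prefix_idx i m. increment Z Z' u \<omega>) = walk_res Z Z' i m \<omega>"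
proof -
  assume i: "i \<ge> 1"
  show ?thesis
  proof (cases "m < i")
    case True
    then have eq: "res_prefix_idx i m = Inl ` {1..m}" unfolding res_prefix_idx_def by simp
    show ?thesis unfolding eq sum_Inl walk_res_def walk_def using True by simp
  next
    case False
    then have im: "i \<in> {1..m}" using i by auto
    have eq: "res_prefix_idx i m = Inl ` ({1..m} - {i}) \<union> {Inr i}" unfolding res_prefix_idx_def using False by simp
    show ?thesis unfolding eq sum_increment_replace[OF finite_atLeastAtMost im] walk_res_def walk_def using False by simp
  qed
qed

lemma sum_res_suffix_idx: "i \<ge> 1 \<Longrightarrow> i \<le> n \<Longrightarrow> m \<le> n \<Longrightarrow>
   (\<Sum>u\<in>res_suffix_idx n i m. increment Z Z' u \<omega>) = walk_res Z Z' i n \<omega> - walk_res Z Z' i (n - m) \<omega>"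
proof -
  assume i: "i \<ge> 1" "i \<le> n" and m: "m \<le> n"
  show ?thesis
  proof (cases "n - m < i")
    case True
    then have "i \<in> {n - m + 1..n}" using i by auto
    then have "(\<Sum>u\<in>res_suffix_idx n i m. increment Z Z' u \<omega>) = (\<Sum>k\<in>{n - m + 1..n}. Z k \<omega>) - Z i \<omega> + Z' i \<omega>"
    proof -
      assume im: "i \<in> {n - m + 1..n}"
      have eq: "res_suffix_idx n i m = Inl ` ({n - m + 1..n} - {i}) \<union> {Inr i}" unfolding res_suffix_idx_def using True by simp
      show ?thesis unfolding eq sum_increment_replace[OF finite_atLeastAtMost im] ..
    qed
    also have "\<dots> = walk_res Z Z' i n \<omega> - walk_res Z Z' i (n - m) \<omega>"
      unfolding walk_res_def using True i walk_split[OF m, of Z \<omega>] by simp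
    finally show ?thesis .
  next
    case False
    then have eq: "res_suffix_idx n i m = Inl ` {n - m + 1..n}" unfolding res_suffix_idx_def by simp
    show ?thesis
      unfolding eq walk_res_def sum_Inl using walk_split[OF m, of Z \<omega>] i False by simp
  qed
qed

lemma windows_in_cone_subset_Ev:
  assumes "1 \<le> i" "i \<le> n" "0 < \<gamma>"
  shows "space M \<inter> windows_in_cone Z Z' prefix_idx n \<gamma> \<delta> \<inter> windows_in_cone Z Z' (suffix_idx n) n \<gamma> \<delta>
      \<inter> windows_in_cone Z Z' (res_prefix_idx i) n \<gamma> \<delta> \<inter> windows_in_cone Z Z' (res_suffix_idx n i) n \<gamma> \<delta>
    \<subseteq> Ev M Z Z' n i \<delta> \<gamma>"
proof (intro subsetI)
  fix \<omega> assume \<omega>: "\<omega> \<in> space M \<inter> windows_in_cone Z Z' prefix_idx n \<gamma> \<delta> \<inter> windows_in_cone Z Z' (suffix_idx n) n \<gamma> \<delta>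
      \<inter> windows_in_cone Z Z' (res_prefix_idx i) n \<gamma> \<delta> \<inter> windows_in_cone Z Z' (res_suffix_idx n i) n \<gamma> \<delta>"
  have pos: "0 < m" if "\<gamma> * real n \<le> real m" for m
  proof -
    have "0 < \<gamma> * real n" using assms by simp
    with that show ?thesis by linarith
  qed
  have "walk Z 0 \<omega> = 0" "walk_res Z Z' i 0 \<omega> = 0"
    using \<open>1 \<le> i\<close> unfolding walk_res_def walk_def by simp_all
  with \<omega> pos assms(1,2) show "\<omega> \<in> Ev M Z Z' n i \<delta> \<gamma>"
    unfolding Ev_def windows_in_cone_def
    by (auto intro!: Jmin_less_of_pos Jmax_greater_of_pos
        simp: sum_prefix_idx sum_suffix_idx sum_res_prefix_idx sum_res_suffix_idx)
qed

lemma tendsto_Min_of_lower_bound: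
  fixes p :: "nat \<Rightarrow> nat \<Rightarrow> real"
  assumes "G \<longlonglongrightarrow> 0" "\<And>n i. i \<in> {1..n} \<Longrightarrow> 1 - G n \<le> p n i \<and> p n i \<le> 1"
  shows "(\<lambda>n. MIN i\<in>{1..n}. p n i) \<longlonglongrightarrow> 1"
proof (rule tendsto_sandwich[where f="\<lambda>n. 1 - G n" and h="\<lambda>_. 1"])
  show "\<forall>\<^sub>F n in sequentially. 1 - G n \<le> (MIN i\<in>{1..n}. p n i)"
    using eventually_ge_at_top[of 1] by eventually_elim (simp add: assms(2))
  show "\<forall>\<^sub>F n in sequentially. (MIN i\<in>{1..n}. p n i) \<le> 1"
    using eventually_ge_at_top[of 1]
  proof eventually_elim
    fix n :: nat assume "1 \<le> n"
    then have "(MIN i\<in>{1..n}. p n i) \<le> p n 1"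
      by (intro Min_le) auto
    also have "\<dots> \<le> 1"
      using assms(2)[where n=n and i=1] \<open>1 \<le> n\<close> by simp
    finally show "(MIN i\<in>{1..n}. p n i) \<le> 1" .
  qed
  show "(\<lambda>n. 1 - G n) \<longlonglongrightarrow> 1"
    using tendsto_diff[OF tendsto_const[of 1] assms(1)] by simp
qed (rule tendsto_const)

locale resampled_walk = prob_space M for M :: "'a measure" +
  fixes Z Z' :: "nat \<Rightarrow> 'a \<Rightarrow> real \<times> real"
  assumes indep_increment: "indep_vars (\<lambda>_. borel) (increment Z Z') increment_idx"
    and distr_Z: "\<And>i. 1 \<le> i \<Longrightarrow> distr M borel (Z i) = distr M borel (Z 1)"
    and distr_Z': "\<And>i. 1 \<le> i \<Longrightarrow> distr M borel (Z' i) = distr M borel (Z 1)"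
begin

lemma measurable_increment: "u \<in> increment_idx \<Longrightarrow> increment Z Z' u \<in> borel_measurable M"
  using indep_increment unfolding indep_vars_def by auto

lemma measurable_Z: "1 \<le> i \<Longrightarrow> Z i \<in> borel_measurable M"
  using measurable_increment[of "Inl i"] unfolding increment_def increment_idx_def by simp

lemma measurable_Z': "1 \<le> i \<Longrightarrow> Z' i \<in> borel_measurable M"
  using measurable_increment[of "Inr i"] unfolding increment_def increment_idx_def by simp

lemma distr_increment:
  assumes "u \<in> increment_idx"
  shows "distr M borel (increment Z Z' u) = distr M borel (Z 1)"
proof -
  obtain k where "1 \<le> k" "u = Inl k \<or> u = Inr k"
    using assms unfolding increment_idx_def by auto
  then show ?thesis
    using distr_Z[OF \<open>1 \<le> k\<close>] distr_Z'[OF \<open>1 \<le> k\<close>] by (auto simp: increment_def)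
qed

lemma long_windows_positive:
  assumes "integrable M (Z 1)" "expectation (Z 1) = \<mu> *\<^sub>R e (pi / 2)" "0 < \<mu>"
    and "0 < \<delta>" "\<delta> < pi / 2" "0 < \<gamma>"
  shows "\<exists>G. G \<longlonglongrightarrow> 0 \<and> (\<forall>n Is. nested_family increment_idx n Is \<longrightarrow>
    (\<exists>B\<in>sets M. prob B \<le> G n \<and> space M - B \<subseteq> windows_in_cone Z Z' Is n \<gamma> \<delta>))"
proof -
  define \<eta> where "\<eta> = \<mu> * sin \<delta> / 4"
  have "0 < sin \<delta>"
    using assms(4,5) by (intro sin_gt_zero) auto
  then have "0 < \<eta>" "0 < \<mu> / 2"
    unfolding \<eta>_def using \<open>0 < \<mu>\<close> by simp_all
  have Z1[measurable]: "Z 1 \<in> borel_measurable M"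
    by (rule measurable_Z) simp
  have mean_fst: "fst (expectation (Z 1)) = 0" and mean_snd: "snd (expectation (Z 1)) = \<mu>"
    using assms(2) by (simp_all add: e_def)
  define Bx where "Bx n Is = window_deviation M (\<lambda>u \<omega>. fst (increment Z Z' u \<omega>)) Is n \<gamma> \<eta> 0" for n Is
  define By where "By n Is = window_deviation M (\<lambda>u \<omega>. snd (increment Z Z' u \<omega>)) Is n \<gamma> (\<mu> / 2) \<mu>" for n Is
  obtain gx where "gx \<longlonglongrightarrow> 0" and gx: "\<And>n Is. nested_family increment_idx n Is \<Longrightarrow> prob (Bx n Is) \<le> gx n"
    using window_lln_bounded_linear[OF indep_increment Z1 distr_increment assms(1) bounded_linear_fst
      \<open>0 < \<gamma>\<close> \<open>0 < \<eta>\<close>, unfolded mean_fst] unfolding Bx_def by blast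
  obtain gy where "gy \<longlonglongrightarrow> 0" and gy: "\<And>n Is. nested_family increment_idx n Is \<Longrightarrow> prob (By n Is) \<le> gy n"
    using window_lln_bounded_linear[OF indep_increment Z1 distr_increment assms(1) bounded_linear_snd
      \<open>0 < \<gamma>\<close> \<open>0 < \<mu> / 2\<close>, unfolded mean_snd] unfolding By_def by blast
  have sets: "Bx n Is \<in> sets M \<and> By n Is \<in> sets M" if Is: "nested_family increment_idx n Is" for n Is
  proof -
    have "(\<lambda>\<omega>. c (increment Z Z' u \<omega>)) \<in> borel_measurable M"
      if "u \<in> increment_idx" "bounded_linear c" for u and c :: "real \<times> real \<Rightarrow> real"
      using borel_measurable_continuous_onI[OF linear_continuous_on[OF that(2)]] measurable_increment[OF that(1)]
      by measurable
    moreover have "Is m \<subseteq> increment_idx" if "m \<le> n" for m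
      using Is that unfolding nested_family_def by auto
    ultimately show ?thesis
      unfolding Bx_def By_def using bounded_linear_fst bounded_linear_snd
      by (intro conjI window_deviation_sets[where J=increment_idx]; blast)
  qed
  have cone: "space M - (Bx n Is \<union> By n Is) \<subseteq> windows_in_cone Z Z' Is n \<gamma> \<delta>" for n Is
    unfolding windows_in_cone_def
  proof (intro subsetI CollectI allI impI)
    fix \<omega> m \<theta>
    assume "\<omega> \<in> space M - (Bx n Is \<union> By n Is)" "\<gamma> * real n \<le> real m" "m \<le> n" "0 < m"
      and "\<theta> \<in> {\<delta>..pi - \<delta>}"
    then show "0 < (\<Sum>u\<in>Is m. increment Z Z' u \<omega>) \<bullet> e \<theta>"
      using \<open>0 < \<delta>\<close> \<open>\<delta> < pi / 2\<close> \<open>0 < \<mu>\<close> unfolding Bx_def By_def window_deviation_def \<eta>_def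
      by (intro inner_e_pos_of_drift[where \<mu>=\<mu> and m="real m"]) (auto simp: fst_sum snd_sum not_less)
  qed
  have "\<exists>B\<in>sets M. prob B \<le> gx n + gy n \<and> space M - B \<subseteq> windows_in_cone Z Z' Is n \<gamma> \<delta>"
    if Is: "nested_family increment_idx n Is" for n Is
  proof (intro bexI conjI)
    show "Bx n Is \<union> By n Is \<in> sets M"
      using sets[OF Is] by auto
    have "prob (Bx n Is \<union> By n Is) \<le> prob (Bx n Is) + prob (By n Is)"
      using sets[OF Is] by (intro measure_Un_le) auto
    then show "prob (Bx n Is \<union> By n Is) \<le> gx n + gy n"
      using gx[OF Is] gy[OF Is] by linarith
  qed (rule cone)
  moreover have "(\<lambda>n. gx n + gy n) \<longlonglongrightarrow> 0"
    using tendsto_add[OF \<open>gx \<longlonglongrightarrow> 0\<close> \<open>gy \<longlonglongrightarrow> 0\<close>] by simp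
  ultimately show ?thesis
    by blast
qed

lemma prob_Ev_lower_bound:
  assumes "integrable M (Z 1)" "expectation (Z 1) = \<mu> *\<^sub>R e (pi / 2)" "0 < \<mu>"
    and "0 < \<delta>" "\<delta> < pi / 2" "0 < \<gamma>"
  shows "\<exists>G. G \<longlonglongrightarrow> 0 \<and> (\<forall>n i. i \<in> {1..n} \<longrightarrow> 1 - G n \<le> prob (Ev M Z Z' n i \<delta> \<gamma>))"
proof -
  obtain G where "G \<longlonglongrightarrow> 0" and G: "\<And>n Is. nested_family increment_idx n Is \<Longrightarrow>
    \<exists>B\<in>sets M. prob B \<le> G n \<and> space M - B \<subseteq> windows_in_cone Z Z' Is n \<gamma> \<delta>"
    using long_windows_positive[OF assms] by blast
  have "1 - 4 * G n \<le> prob (Ev M Z Z' n i \<delta> \<gamma>)" if "i \<in> {1..n}" for n i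
  proof -
    have i: "1 \<le> i" "i \<le> n" using that by auto
    obtain B1 where B1: "B1 \<in> sets M" "prob B1 \<le> G n" "space M - B1 \<subseteq> windows_in_cone Z Z' prefix_idx n \<gamma> \<delta>"
      using G[OF nested_prefix_idx] by blast
    obtain B2 where B2: "B2 \<in> sets M" "prob B2 \<le> G n"
      "space M - B2 \<subseteq> windows_in_cone Z Z' (suffix_idx n) n \<gamma> \<delta>"
      using G[OF nested_suffix_idx] by blast
    obtain B3 where B3: "B3 \<in> sets M" "prob B3 \<le> G n"
      "space M - B3 \<subseteq> windows_in_cone Z Z' (res_prefix_idx i) n \<gamma> \<delta>"
      using G[OF nested_res_prefix_idx[OF i(1)]] by blast
    obtain B4 where B4: "B4 \<in> sets M" "prob B4 \<le> G n"
      "space M - B4 \<subseteq> windows_in_cone Z Z' (res_suffix_idx n i) n \<gamma> \<delta>"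
      using G[OF nested_res_suffix_idx[OF i]] by blast
    have "prob (B1 \<union> B2 \<union> B3 \<union> B4) \<le> prob (B1 \<union> B2 \<union> B3) + prob B4"
      using B1 B2 B3 B4 by (intro measure_Un_le) simp_all
    also have "prob (B1 \<union> B2 \<union> B3) \<le> prob (B1 \<union> B2) + prob B3"
      using B1 B2 B3 by (intro measure_Un_le) simp_all
    also have "prob (B1 \<union> B2) \<le> prob B1 + prob B2"
      using B1 B2 by (intro measure_Un_le) simp_all
    finally have prob_B: "prob (B1 \<union> B2 \<union> B3 \<union> B4) \<le> 4 * G n"
      using B1 B2 B3 B4 by linarith
    have "space M - (B1 \<union> B2 \<union> B3 \<union> B4) \<subseteq> Ev M Z Z' n i \<delta> \<gamma>"
      using B1(3) B2(3) B3(3) B4(3) windows_in_cone_subset_Ev[OF i \<open>0 < \<gamma>\<close>, of M Z Z' \<delta>] by blast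
    then have "prob (space M - Ev M Z Z' n i \<delta> \<gamma>) \<le> prob (B1 \<union> B2 \<union> B3 \<union> B4)"
      using B1 B2 B3 B4 by (intro finite_measure_mono) auto
    moreover have "Ev M Z Z' n i \<delta> \<gamma> \<in> sets M"
      using measurable_Z measurable_Z' i(1) \<open>0 < \<delta>\<close> \<open>\<delta> < pi / 2\<close> by (rule Ev_sets)
    ultimately show ?thesis
      using prob_compl[of "Ev M Z Z' n i \<delta> \<gamma>"] prob_B by linarith
  qed
  moreover have "(\<lambda>n. 4 * G n) \<longlonglongrightarrow> 0"
    using tendsto_mult_right_zero[OF \<open>G \<longlonglongrightarrow> 0\<close>] by simp
  ultimately show ?thesis
    by blast
qed

end

theorem lemma4p1:
  fixes M :: "'a measure" and Z Z' :: "nat \<Rightarrow> 'a \<Rightarrow> real \<times> real"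
    and \<gamma> \<delta> :: real
  assumes "prob_space M"
    and meas: "\<And>i. i \<ge> 1 \<Longrightarrow> Z i \<in> borel_measurable M"
    and meas': "\<And>i. i \<ge> 1 \<Longrightarrow> Z' i \<in> borel_measurable M"
    and indep: "prob_space.indep_vars M (\<lambda>_. borel)
                  (\<lambda>x. case x of Inl i \<Rightarrow> Z i | Inr i \<Rightarrow> Z' i)
                  (Inl ` {1..} \<union> Inr ` {1..})"
    and ident: "\<And>i. i \<ge> 1 \<Longrightarrow> distr M borel (Z i) = distr M borel (Z 1)"
    and ident': "\<And>i. i \<ge> 1 \<Longrightarrow> distr M borel (Z' i) = distr M borel (Z 1)"
    and \<gamma>: "0 < \<gamma>" "\<gamma> < 1/2"
    and \<delta>: "0 < \<delta>" "\<delta> < pi/2"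
  shows "(\<forall>n i. i \<in> Iset n \<gamma> \<longrightarrow>
            (AE \<omega> in M. \<forall>\<theta>\<in>{\<delta>..pi - \<delta>}.
               Delta Z Z' n i \<theta> \<omega> * indicator (Ev M Z Z' n i \<delta> \<gamma>) \<omega>
               = ((Z i \<omega> - Z' i \<omega>) \<bullet> e \<theta>) * indicator (Ev M Z Z' n i \<delta> \<gamma>) \<omega>))
       \<and> (\<forall>\<mu>::real. integrable M (Z 1) \<and> 0 < \<mu> \<and> prob_space.expectation M (Z 1) = \<mu> *\<^sub>R e (pi/2)
            \<longrightarrow> (\<lambda>n. MIN i\<in>{1..n}. measure M (Ev M Z Z' n i \<delta> \<gamma>)) \<longlonglongrightarrow> 1)"
proof (intro conjI allI impI)
  fix n i assume "i \<in> Iset n \<gamma>"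
  then show "AE \<omega> in M. \<forall>\<theta>\<in>{\<delta>..pi - \<delta>}.
      Delta Z Z' n i \<theta> \<omega> * indicator (Ev M Z Z' n i \<delta> \<gamma>) \<omega>
      = ((Z i \<omega> - Z' i \<omega>) \<bullet> e \<theta>) * indicator (Ev M Z Z' n i \<delta> \<gamma>) \<omega>"
    by (intro AE_I2 ballI) (simp add: indicator_def Delta_eq_on_Ev)
next
  fix \<mu> :: real
  assume H: "integrable M (Z 1) \<and> 0 < \<mu> \<and> prob_space.expectation M (Z 1) = \<mu> *\<^sub>R e (pi/2)"
  have "increment Z Z' = (\<lambda>x. case x of Inl i \<Rightarrow> Z i | Inr i \<Rightarrow> Z' i)"
    by (intro ext) (simp add: increment_def)
  then have "prob_space.indep_vars M (\<lambda>_. borel) (increment Z Z') increment_idx"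
    using indep unfolding increment_idx_def by simp
  with \<open>prob_space M\<close> interpret resampled_walk M Z Z'
    by (intro resampled_walk.intro resampled_walk_axioms.intro ident ident')
  obtain G where "G \<longlonglongrightarrow> 0"
    and "\<And>n i. i \<in> {1..n} \<Longrightarrow> 1 - G n \<le> prob (Ev M Z Z' n i \<delta> \<gamma>)"
    using prob_Ev_lower_bound[of \<mu> \<delta> \<gamma>] H \<delta> \<gamma> by blast
  then show "(\<lambda>n. MIN i\<in>{1..n}. measure M (Ev M Z Z' n i \<delta> \<gamma>)) \<longlonglongrightarrow> 1"
    by (intro tendsto_Min_of_lower_bound) simp_all
qed

end
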